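(* Let $n\ge 1$ be a fixed integer. For an integer $H\ge 1$ let $\mathcal{M}_n(\mathbb{Z};H)$ be the set of $n\times n$ matrices $A=(a_{ij})_{i,j=1}^n$ with integer entries satisfying $|a_{ij}|\le H$ for all $i,j$, and define \[ \Phi_n(H)=\sum_{\substack{A\in\mathcal{M}_n(\mathbb{Z};H)\\ \det A\ne 0}}\frac{\varphi(|\det A|)}{|\det A|}, \] where $\varphi$ is the Euler totient function. Then \[ \Phi_n(H)=2^{n^2}\sigma_n H^{n^2}+O\left(H^{n^2-\vartheta_n+o(1)}\right) \] as $H\to\infty$, where \[ \sigma_n=\prod_{p\ \text{prime}}\left(1-\frac1p\right)\left(1+\frac1p\prod_{j=2}^{n}\left(1-p^{-j}\right)\right),\qquad \vartheta_n=1-\frac{1}{n^3+1}. \]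
   Context: Implied constants depend only on $n$. The notation $O(H^{a+o(1)})$ means: for every fixed $\varepsilon>0$ the quantity is $O(H^{a+\varepsilon})$ for all sufficiently large $H$ (with the implied constant allowed to depend on $n$ and $\varepsilon$). *)

theory Defs
  imports "HOL-Analysis.Analysis" "HOL-Number_Theory.Totient"
begin

definition int_matrices_bounded :: "int \<Rightarrow> (int ^ ('n::finite) ^ 'n) set" where
  "int_matrices_bounded H = {A. \<forall>i j. \<bar>A $ i $ j\<bar> \<le> H}"

definition Phi :: "('n::finite) itself \<Rightarrow> int \<Rightarrow> real" where
  "Phi _ H = (\<Sum>A \<in> {A :: int ^ 'n ^ 'n. A \<in> int_matrices_bounded H \<and> det A \<noteq> 0}.
       real (totient (nat \<bar>det A\<bar>)) / real_of_int \<bar>det A\<bar>)"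

definition sigma_factor :: "nat \<Rightarrow> nat \<Rightarrow> real" where
  "sigma_factor n p = (1 - 1 / real p) *
     (1 + (1 / real p) * (\<Prod>j\<in>{2..n}. (1 - 1 / real p ^ j)))"

definition sigma_const :: "nat \<Rightarrow> real" where
  "sigma_const n = lim (\<lambda>N. \<Prod>p\<in>{p. prime p \<and> p \<le> N}. sigma_factor n p)"

definition vartheta :: "nat \<Rightarrow> real" where
  "vartheta n = 1 - 1 / (real n ^ 3 + 1)"

end

theory Submission
  imports Defs
begin

(* Expand \<phi>(k)/k = \<Sum>d|k. \<mu>(d)/d and truncate at d \<le> H: this costs at most 2^\<omega>(k)/H = O(H^(\<epsilon>-1)) per
   matrix, so up to O(H^(n\<^sup>2-1+\<epsilon>)) the sum \<Phi>_n(H) becomes \<Sum>d\<le>H. \<mu>(d)/d * #{A : d | det A}, singular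
   matrices being negligible (at most n (2H+1)^(n\<^sup>2-1) of them, by peeling off principal minors).
   Entries are equidistributed mod d, so #{A : d | det A} = \<rho>(d) (2H+1)^(n\<^sup>2) + O(\<rho>(d) d (5H)^(n\<^sup>2-1)),
   where \<rho>(d) is the proportion of matrices mod d with vanishing determinant. By the Chinese remainder
   theorem \<rho> is multiplicative, and counting invertible matrices mod p row by row gives
   1 - \<rho>(p)/p = (1 - 1/p)(1 + 1/p \<Prod>j=2..n. 1 - p^-j), the Euler factor of \<sigma>_n. Rankin's trick
   (\<Sum> over squarefree d \<le> D of f(d)/d \<le> D^\<delta> \<Prod>p. 1 + f(p) p^(-1-\<delta>)) bounds the error sums and
   shows that the truncated series \<Sum>d\<le>H. \<mu>(d)\<rho>(d)/d is within O(H^(\<delta>-1)) of \<sigma>_n. The resulting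
   exponent n\<^sup>2 - 1 + \<epsilon> is at most n\<^sup>2 - \<vartheta>_n + \<epsilon>, since \<vartheta>_n < 1. *)

section \<open>Integer matrices with bounded entries\<close>

lemma bij_betw_vec_nth:
  "bij_betw vec_nth {v::'a^'n::finite. \<forall>j. v$j \<in> S j} (Pi\<^sub>E UNIV S)"
  by (rule bij_betwI[where g = vec_lambda]) auto

lemma card_vec_set:
  assumes "\<And>j. finite (S j)"
  shows "card {v::'a^'n::finite. \<forall>j. v$j \<in> S j} = (\<Prod>j\<in>UNIV. card (S j))"
  using bij_betw_same_card[OF bij_betw_vec_nth] by (simp add: card_PiE)

lemma finite_vec_set:
  assumes "\<And>j. finite (S j)"
  shows "finite {v::'a^'n::finite. \<forall>j. v$j \<in> S j}"
  using bij_betw_finite[OF bij_betw_vec_nth[of S]] assms by (simp add: finite_PiE)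

lemma mat_set_eq_rows:
  "{A::'a^'n::finite^'m::finite. \<forall>i j. A$i$j \<in> S i j} = {A. \<forall>i. A$i \<in> {v. \<forall>j. v$j \<in> S i j}}"
  by auto

lemma card_mat_set:
  assumes "\<And>i j. finite (S i j)"
  shows "card {A::'a^'n::finite^'m::finite. \<forall>i j. A$i$j \<in> S i j} = (\<Prod>i\<in>UNIV. \<Prod>j\<in>UNIV. card (S i j))"
  unfolding mat_set_eq_rows by (subst card_vec_set) (auto simp: assms finite_vec_set card_vec_set)

lemma finite_mat_set:
  assumes "\<And>i j. finite (S i j)"
  shows "finite {A::'a^'n::finite^'m::finite. \<forall>i j. A$i$j \<in> S i j}"
  unfolding mat_set_eq_rows by (rule finite_vec_set) (auto simp: assms finite_vec_set)

lemma card_mat_set_const: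
  assumes "finite S"
  shows "card {A::'a^'n::finite^'m::finite. \<forall>i j. A$i$j \<in> S} = card S ^ (CARD('n) * CARD('m))"
proof -
  have "card {A::'a^'n^'m. \<forall>i j. A$i$j \<in> S} = (\<Prod>i\<in>(UNIV::'m set). \<Prod>j\<in>(UNIV::'n set). card S)"
    by (rule card_mat_set) (rule assms)
  then show ?thesis
    by (simp add: power_mult)
qed

lemma int_matrices_bounded_eq:
  "int_matrices_bounded H = {A::int^'n::finite^'n. \<forall>i j. A$i$j \<in> {-H..H}}"
  unfolding int_matrices_bounded_def by (intro Collect_cong) (meson abs_le_iff atLeastAtMost_iff minus_le_iff)

lemma finite_int_matrices_bounded: "finite (int_matrices_bounded H :: (int^'n::finite^'n) set)"
  unfolding int_matrices_bounded_eq by (rule finite_mat_set) auto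

lemma card_int_matrices_bounded:
  assumes "H \<ge> 0"
  shows "card (int_matrices_bounded H :: (int^'n::finite^'n) set) = nat (2*H+1) ^ (CARD('n)*CARD('n))"
  unfolding int_matrices_bounded_eq using assms by (subst card_mat_set_const) auto

lemma card_int_matrices_bounded_entry_zero:
  assumes "H \<ge> 0"
  shows "card {A \<in> int_matrices_bounded H :: (int^'n::finite^'n) set. A$i0$j0 = 0}
           = nat (2*H+1) ^ (CARD('n)*CARD('n) - 1)"
proof -
  define S where "S i j = {x \<in> {-H..H}. (i,j) = (i0,j0) \<longrightarrow> x = 0}" for i j
  have "card {A \<in> int_matrices_bounded H :: (int^'n^'n) set. A$i0$j0 = 0}
          = card {A::int^'n^'n. \<forall>i j. A$i$j \<in> S i j}"
    unfolding int_matrices_bounded_eq S_def by (rule arg_cong[where f = card]) auto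
  also have "\<dots> = (\<Prod>i\<in>UNIV. \<Prod>j\<in>UNIV. card (S i j))"
    by (rule card_mat_set) (auto simp: S_def intro: finite_subset[of _ "{-H..H}"])
  also have "\<dots> = (\<Prod>ij\<in>UNIV. card (S (fst ij) (snd ij)))"
    by (simp add: prod.cartesian_product split_beta UNIV_Times_UNIV[symmetric] del: UNIV_Times_UNIV)
  also have "\<dots> = card (S i0 j0) * (\<Prod>ij\<in>UNIV - {(i0,j0)}. card (S (fst ij) (snd ij)))"
    by (subst prod.remove[of _ "(i0,j0)"]) simp_all
  also have "\<dots> = (\<Prod>ij\<in>UNIV - {(i0,j0)}. nat (2*H+1))"
  proof -
    have "S i0 j0 = {0}" "\<And>ij. ij \<noteq> (i0,j0) \<Longrightarrow> S (fst ij) (snd ij) = {-H..H}"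
      using assms by (auto simp: S_def)
    then show ?thesis
      using assms by simp
  qed
  finally show ?thesis
    by (simp add: card_Diff_singleton)
qed

lemma abs_det_le:
  fixes A :: "'a::linordered_idom^'n::finite^'n"
  assumes "\<And>i j. \<bar>A$i$j\<bar> \<le> H"
  shows "\<bar>det A\<bar> \<le> fact CARD('n) * H ^ CARD('n)"
proof -
  have term_le: "\<bar>of_int (sign p) * (\<Prod>i\<in>UNIV. A$i$p i)\<bar> \<le> H ^ CARD('n)" for p
  proof -
    have "\<bar>of_int (sign p) * (\<Prod>i\<in>UNIV. A$i$p i)\<bar> = (\<Prod>i\<in>UNIV. \<bar>A$i$p i\<bar>)"
      by (simp add: abs_mult sign_def abs_prod)
    also have "\<dots> \<le> (\<Prod>i\<in>(UNIV::'n set). H)"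
      by (rule prod_mono) (simp add: assms)
    finally show ?thesis by simp
  qed
  have "\<bar>det A\<bar> \<le> (\<Sum>p\<in>{p. p permutes (UNIV::'n set)}. H ^ CARD('n))"
    unfolding det_def by (rule order_trans[OF sum_abs sum_mono[OF term_le]])
  then show ?thesis
    by (simp add: card_permutations)
qed
lemma cong_det:
  fixes A B :: "int^'n::finite^'n"
  assumes "\<And>i j. [A$i$j = B$i$j] (mod q)"
  shows "[det A = det B] (mod q)"
  unfolding det_def by (intro cong_sum cong_mult cong_refl cong_prod assms)

definition principal_minor :: "'n::finite set \<Rightarrow> 'a::comm_ring_1^'n^'n \<Rightarrow> 'a" where
  "principal_minor I A = det (\<chi> i j. if i \<in> I \<and> j \<in> I then A$i$j else of_bool (i = j))"

lemma principal_minor_UNIV: "principal_minor UNIV A = det A"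
  unfolding principal_minor_def by (simp add: vec_eq_iff)

lemma principal_minor_empty: "principal_minor {} A = 1"
proof -
  have "(\<chi> i j. if i \<in> {} \<and> j \<in> {} then A$i$j else of_bool (i = j)) = mat 1"
    by (simp add: vec_eq_iff mat_def)
  then show ?thesis
    unfolding principal_minor_def by simp
qed

lemma principal_minor_diff:
  fixes A B :: "'a::comm_ring_1^'n::finite^'n"
  assumes i0: "i0 \<in> I" and eq: "\<And>i j. (i, j) \<noteq> (i0, i0) \<Longrightarrow> A$i$j = B$i$j"
  shows "principal_minor I A - principal_minor I B = (A$i0$i0 - B$i0$i0) * principal_minor (I - {i0}) A"
proof -
  define M where "M = (\<chi> i j. if i \<in> I \<and> j \<in> I then A$i$j else of_bool (i = j))"
  define M' where "M' = (\<chi> i j. if i \<in> I \<and> j \<in> I then B$i$j else of_bool (i = j))"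
  define MJ where "MJ = (\<chi> i j. if i \<in> I - {i0} \<and> j \<in> I - {i0} then A$i$j else of_bool (i = j))"
  have split: "(\<Prod>i\<in>UNIV. f i) = f i0 * (\<Prod>i\<in>UNIV-{i0}. f i)" for f :: "'n \<Rightarrow> 'a"
    by (simp add: prod.remove)
  have term_diff: "(\<Prod>i\<in>UNIV. M$i$p i) - (\<Prod>i\<in>UNIV. M'$i$p i) = (A$i0$i0 - B$i0$i0) * (\<Prod>i\<in>UNIV. MJ$i$p i)"
    if p: "p permutes (UNIV::'n set)" for p
  proof -
    have rest: "(\<Prod>i\<in>UNIV-{i0}. M$i$p i) = (\<Prod>i\<in>UNIV-{i0}. M'$i$p i)"
      by (intro prod.cong refl) (auto simp: M_def M'_def eq)
    show ?thesis
    proof (cases "p i0 = i0")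
      case True
      then have "p i \<noteq> i0" if "i \<noteq> i0" for i
        using that p by (metis permutes_inj injD)
      then have "(\<Prod>i\<in>UNIV-{i0}. MJ$i$p i) = (\<Prod>i\<in>UNIV-{i0}. M$i$p i)"
        by (intro prod.cong refl) (auto simp: M_def MJ_def)
      then show ?thesis
        using True i0 rest by (subst (1 2 3) split) (simp add: M_def M'_def MJ_def algebra_simps)
    next
      case False
      then have "M$i0$p i0 = M'$i0$p i0" "MJ$i0$p i0 = 0"
        by (auto simp: M_def M'_def MJ_def eq)
      then show ?thesis
        using rest by (subst (1 2 3) split) simp
    qed
  qed
  have "principal_minor I A - principal_minor I B
          = (\<Sum>p\<in>{p. p permutes UNIV}. of_int (sign p) * ((\<Prod>i\<in>UNIV. M$i$p i) - (\<Prod>i\<in>UNIV. M'$i$p i)))"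
    unfolding principal_minor_def det_def M_def M'_def by (simp add: sum_subtractf algebra_simps)
  also have "\<dots> = (A$i0$i0 - B$i0$i0) * det MJ"
    unfolding det_def by (simp add: term_diff sum_distrib_left algebra_simps)
  finally show ?thesis
    by (simp add: principal_minor_def MJ_def)
qed

text \<open>Once the other entries are fixed, at most one value of the diagonal entry \<open>(i0, i0)\<close> can make
  the bigger minor vanish, since the smaller one is the slope.\<close>
lemma card_principal_minor_vanishes_le:
  fixes H :: int
  assumes H: "H \<ge> 0" and i0: "i0 \<notin> J"
  shows "card {A \<in> int_matrices_bounded H :: (int^'n::finite^'n) set.
                 principal_minor J A \<noteq> 0 \<and> principal_minor (insert i0 J) A = 0}
           \<le> nat (2*H+1) ^ (CARD('n)*CARD('n) - 1)"
proof -
  define Y where "Y = {A \<in> int_matrices_bounded H :: (int^'n^'n) set.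
                         principal_minor J A \<noteq> 0 \<and> principal_minor (insert i0 J) A = 0}"
  define clear where "clear A = (\<chi> i j. if (i,j) = (i0,i0) then 0 else A$i$j)" for A :: "int^'n^'n"
  have "inj_on clear Y"
  proof
    fix A B assume A: "A \<in> Y" and B: "B \<in> Y" and e: "clear A = clear B"
    have eq: "A$i$j = B$i$j" if "(i,j) \<noteq> (i0,i0)" for i j
      using arg_cong[OF e, of "\<lambda>M. M$i$j"] that by (auto simp: clear_def)
    have "(A$i0$i0 - B$i0$i0) * principal_minor J A = 0"
      using principal_minor_diff[of i0 "insert i0 J" A B] eq A B i0 by (simp add: Y_def)
    then have "A$i0$i0 = B$i0$i0"
      using A by (simp add: Y_def)
    then have "A$i$j = B$i$j" for i j
      using eq by (cases "(i,j) = (i0,i0)") auto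
    then show "A = B"
      by (simp add: vec_eq_iff)
  qed
  then have "card Y = card (clear ` Y)"
    by (simp add: card_image)
  also have "\<dots> \<le> card {A \<in> int_matrices_bounded H :: (int^'n^'n) set. A$i0$i0 = 0}"
    using H by (intro card_mono finite_subset[OF _ finite_int_matrices_bounded])
       (auto simp: clear_def Y_def int_matrices_bounded_eq)
  also have "\<dots> = nat (2*H+1) ^ (CARD('n)*CARD('n) - 1)"
    by (rule card_int_matrices_bounded_entry_zero[OF H])
  finally show ?thesis
    by (simp add: Y_def)
qed

lemma card_principal_minor_zero_le:
  fixes H :: int
  assumes H: "H \<ge> 0" and I: "finite I"
  shows "card {A \<in> int_matrices_bounded H :: (int^'n::finite^'n) set. principal_minor I A = 0}
           \<le> card I * nat (2*H+1) ^ (CARD('n)*CARD('n) - 1)"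
  using I
proof (induction I rule: finite_induct)
  case empty
  then show ?case
    by (simp add: principal_minor_empty)
next
  case (insert i0 J)
  let ?B = "int_matrices_bounded H :: (int^'n^'n) set"
  have "{A \<in> ?B. principal_minor (insert i0 J) A = 0}
          \<subseteq> {A \<in> ?B. principal_minor J A = 0}
             \<union> {A \<in> ?B. principal_minor J A \<noteq> 0 \<and> principal_minor (insert i0 J) A = 0}"
    by auto
  then have "card {A \<in> ?B. principal_minor (insert i0 J) A = 0}
               \<le> card {A \<in> ?B. principal_minor J A = 0}
                 + card {A \<in> ?B. principal_minor J A \<noteq> 0 \<and> principal_minor (insert i0 J) A = 0}"
    by (intro order_trans[OF card_mono card_Un_le]) (simp_all add: finite_int_matrices_bounded)
  then show ?case
    using insert card_principal_minor_vanishes_le[OF H insert(2)] by simp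
qed

lemma card_singular_int_matrices_bounded_le:
  fixes H :: int
  assumes "H \<ge> 0"
  shows "card {A \<in> int_matrices_bounded H :: (int^'n::finite^'n) set. det A = 0}
           \<le> CARD('n) * nat (2*H+1) ^ (CARD('n)*CARD('n) - 1)"
  using card_principal_minor_zero_le[OF assms, of UNIV] by (simp add: principal_minor_UNIV)

section \<open>Singular matrices modulo a prime\<close>

text \<open>Linear algebra over \<open>\<int>/p\<close>, with vectors and coefficients represented by their least
  nonnegative residues.\<close>

definition residue_vecs :: "nat \<Rightarrow> (int^'m::finite) set" where
  "residue_vecs p = {v. \<forall>j. v$j \<in> {0..<int p}}"

definition vec_mod :: "nat \<Rightarrow> int^'m::finite \<Rightarrow> int^'m" where
  "vec_mod p v = (\<chi> j. v$j mod int p)"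

definition lincomb :: "('i \<Rightarrow> int) \<Rightarrow> 'i set \<Rightarrow> ('i \<Rightarrow> int^'m::finite) \<Rightarrow> int^'m" where
  "lincomb c R f = (\<Sum>i\<in>R. c i *s f i)"

definition residue_coeffs :: "nat \<Rightarrow> 'i set \<Rightarrow> ('i \<Rightarrow> int) set" where
  "residue_coeffs p R = Pi\<^sub>E R (\<lambda>_. {0..<int p})"

definition independent_mod :: "nat \<Rightarrow> 'i set \<Rightarrow> ('i \<Rightarrow> int^'m::finite) \<Rightarrow> bool" where
  "independent_mod p R f \<longleftrightarrow>
     (\<forall>c \<in> residue_coeffs p R. vec_mod p (lincomb c R f) = 0 \<longrightarrow> (\<forall>i\<in>R. c i = 0))"

definition span_mod :: "nat \<Rightarrow> 'i set \<Rightarrow> ('i \<Rightarrow> int^'m::finite) \<Rightarrow> (int^'m) set" where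
  "span_mod p R f = (\<lambda>c. vec_mod p (lincomb c R f)) ` residue_coeffs p R"

lemma lincomb_nth: "lincomb c R f $ j = (\<Sum>i\<in>R. c i * f i $ j)"
  by (simp add: lincomb_def sum_component)

lemma lincomb_cong:
  "(\<And>i. i \<in> R \<Longrightarrow> c i = c' i) \<Longrightarrow> (\<And>i. i \<in> R \<Longrightarrow> f i = g i) \<Longrightarrow> lincomb c R f = lincomb c' R g"
  unfolding lincomb_def by (intro sum.cong) auto

lemma lincomb_insert: "finite R \<Longrightarrow> r \<notin> R \<Longrightarrow> lincomb c (insert r R) f = c r *s f r + lincomb c R f"
  by (simp add: lincomb_def)

lemma cong_lincomb_nth:
  assumes "\<And>i. i \<in> R \<Longrightarrow> [c i = c' i] (mod int p)"
  shows "[lincomb c R f $ j = lincomb c' R f $ j] (mod int p)"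
  unfolding lincomb_nth by (intro cong_sum cong_mult cong_refl assms)

lemma vec_mod_eq_iff: "vec_mod p u = vec_mod p w \<longleftrightarrow> (\<forall>j. [u$j = w$j] (mod int p))"
  by (simp add: vec_mod_def vec_eq_iff cong_def)

lemma vec_mod_eq_0_iff: "vec_mod p u = 0 \<longleftrightarrow> (\<forall>j. [u$j = 0] (mod int p))"
  by (simp add: vec_mod_def vec_eq_iff cong_def)

lemma vec_mod_residue_vecs: "v \<in> residue_vecs p \<Longrightarrow> vec_mod p v = v"
  by (simp add: vec_mod_def residue_vecs_def vec_eq_iff)

lemma vec_mod_in_residue_vecs: "p > 0 \<Longrightarrow> vec_mod p v \<in> residue_vecs p"
  by (simp add: vec_mod_def residue_vecs_def)

lemma finite_residue_vecs: "finite (residue_vecs p :: (int^'m::finite) set)"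
  unfolding residue_vecs_def by (rule finite_vec_set) auto

lemma card_residue_vecs: "card (residue_vecs p :: (int^'m::finite) set) = p ^ CARD('m)"
  unfolding residue_vecs_def by (subst card_vec_set) auto

lemma span_mod_subset: "p > 0 \<Longrightarrow> span_mod p R f \<subseteq> residue_vecs p"
  unfolding span_mod_def using vec_mod_in_residue_vecs by blast

lemma independent_mod_cong:
  "(\<And>i. i \<in> R \<Longrightarrow> f i = g i) \<Longrightarrow> independent_mod p R f = independent_mod p R g"
  unfolding independent_mod_def by (simp cong: lincomb_cong)

lemma span_mod_cong:
  "(\<And>i. i \<in> R \<Longrightarrow> f i = g i) \<Longrightarrow> span_mod p R f = span_mod p R g"
  unfolding span_mod_def by (simp cong: lincomb_cong)

lemma card_span_mod:
  assumes R: "finite R" and ind: "independent_mod p R f" and p: "p > 0"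
  shows "card (span_mod p R f) = p ^ card R"
proof -
  have "inj_on (\<lambda>c. vec_mod p (lincomb c R f)) (residue_coeffs p R)"
  proof
    fix c c' assume c: "c \<in> residue_coeffs p R" and c': "c' \<in> residue_coeffs p R"
      and e: "vec_mod p (lincomb c R f) = vec_mod p (lincomb c' R f)"
    define d where "d = restrict (\<lambda>i. (c i - c' i) mod int p) R"
    have "[lincomb d R f $ j = 0] (mod int p)" for j
    proof -
      have "[lincomb d R f $ j = lincomb (\<lambda>i. c i - c' i) R f $ j] (mod int p)"
        by (rule cong_lincomb_nth) (auto simp: d_def cong_def)
      also have "lincomb (\<lambda>i. c i - c' i) R f $ j = lincomb c R f $ j - lincomb c' R f $ j"
        by (simp add: lincomb_nth algebra_simps sum_subtractf)
      also have "[\<dots> = 0] (mod int p)"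
        using e unfolding vec_mod_eq_iff by (simp add: cong_iff_dvd_diff)
      finally show ?thesis .
    qed
    moreover have "d \<in> residue_coeffs p R"
      using p by (auto simp: d_def residue_coeffs_def)
    ultimately have "\<forall>i\<in>R. d i = 0"
      using ind unfolding independent_mod_def vec_mod_eq_0_iff by blast
    then have "c i mod int p = c' i mod int p" if "i \<in> R" for i
      using that by (simp add: d_def mod_eq_dvd_iff flip: mod_eq_0_iff_dvd)
    then have "c i = c' i" if "i \<in> R" for i
      using that c c' by (metis PiE_mem atLeastLessThan_iff mod_pos_pos_trivial residue_coeffs_def)
    then show "c = c'"
      using c c' unfolding residue_coeffs_def by (intro PiE_ext) auto
  qed
  then show ?thesis
    unfolding span_mod_def using R by (simp add: card_image residue_coeffs_def card_PiE)
qed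

lemma independent_mod_insertD:
  assumes R: "finite R" and r: "r \<notin> R" and p: "p > 0" and ind: "independent_mod p (insert r R) f"
  shows "independent_mod p R f"
  unfolding independent_mod_def
proof (rule ballI, rule impI)
  fix c assume c: "c \<in> residue_coeffs p R" and z: "vec_mod p (lincomb c R f) = 0"
  have "c(r := 0) \<in> residue_coeffs p (insert r R)"
    using c p by (auto simp: residue_coeffs_def PiE_iff extensional_def)
  moreover have "lincomb (c(r := 0)) (insert r R) f = lincomb c R f"
    using R r by (simp add: lincomb_insert, intro lincomb_cong) auto
  ultimately have "\<forall>i\<in>insert r R. (c(r := 0)) i = 0"
    using ind z unfolding independent_mod_def by metis
  then show "\<forall>i\<in>R. c i = 0"
    using r by (metis fun_upd_other insertCI)
qed

lemma independent_mod_insert_not_in_span_mod: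
  assumes R: "finite R" and r: "r \<notin> R" and p: "p > 1" and ind: "independent_mod p (insert r R) f"
  shows "f r \<notin> span_mod p R f"
proof
  assume "f r \<in> span_mod p R f"
  then obtain c where c: "c \<in> residue_coeffs p R" and fc: "f r = vec_mod p (lincomb c R f)"
    unfolding span_mod_def by blast
  define c' where "c' = c(r := int p - 1)"
  have "c' \<in> residue_coeffs p (insert r R)"
    using c p by (auto simp: residue_coeffs_def c'_def PiE_iff extensional_def)
  moreover have "vec_mod p (lincomb c' (insert r R) f) = 0"
    unfolding vec_mod_eq_0_iff
  proof
    fix j
    have lc: "lincomb c' (insert r R) f = (int p - 1) *s f r + lincomb c R f"
      using R r by (simp add: lincomb_insert c'_def, intro lincomb_cong) auto
    have "lincomb c' (insert r R) f $ j = (int p - 1) * f r $ j + lincomb c R f $ j"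
      by (simp only: lc vector_add_component vector_smult_component)
    also have "[\<dots> = (int p - 1) * f r $ j + f r $ j] (mod int p)"
      using fc by (intro cong_add cong_refl) (simp add: vec_mod_def cong_def)
    also have "(int p - 1) * f r $ j + f r $ j = int p * f r $ j"
      by (simp add: algebra_simps)
    also have "[int p * f r $ j = 0] (mod int p)"
      by (simp add: cong_0_iff)
    finally show "[lincomb c' (insert r R) f $ j = 0] (mod int p)" .
  qed
  ultimately have "c' r = 0"
    using ind unfolding independent_mod_def by blast
  then show False
    using p by (simp add: c'_def)
qed

lemma in_span_mod_if_relation:
  assumes p: "prime p" and fr: "f r \<in> residue_vecs p"
    and cr: "\<not> int p dvd c r" and z: "\<And>j. [c r * f r $ j + lincomb c R f $ j = 0] (mod int p)"
  shows "f r \<in> span_mod p R f"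
proof -
  have "coprime (c r) (int p)"
    using p cr by (simp add: coprime_commute prime_imp_coprime)
  then obtain u where u: "[c r * u = 1] (mod int p)"
    using cong_solve_coprime_int by blast
  define d where "d = restrict (\<lambda>i. (- u * c i) mod int p) R"
  have "[lincomb d R f $ j = f r $ j] (mod int p)" for j
  proof -
    have "[lincomb d R f $ j = lincomb (\<lambda>i. - u * c i) R f $ j] (mod int p)"
      by (rule cong_lincomb_nth) (auto simp: d_def cong_def)
    also have "lincomb (\<lambda>i. - u * c i) R f $ j
                 = - u * (c r * f r $ j + lincomb c R f $ j) + (c r * u) * f r $ j"
      by (simp add: lincomb_nth sum_distrib_left algebra_simps)
    also have "[\<dots> = - u * 0 + 1 * f r $ j] (mod int p)"
      by (intro cong_add cong_mult cong_refl u z)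
    finally show ?thesis
      by simp
  qed
  then have "vec_mod p (lincomb d R f) = vec_mod p (f r)"
    unfolding vec_mod_eq_iff by blast
  then have "vec_mod p (lincomb d R f) = f r"
    using vec_mod_residue_vecs[OF fr] by simp
  moreover have "d \<in> residue_coeffs p R"
    using p prime_gt_0_nat by (auto simp: d_def residue_coeffs_def)
  ultimately show ?thesis
    unfolding span_mod_def by force
qed

lemma independent_mod_insertI:
  assumes R: "finite R" and r: "r \<notin> R" and p: "prime p" and fr: "f r \<in> residue_vecs p"
    and ind: "independent_mod p R f" and ns: "f r \<notin> span_mod p R f"
  shows "independent_mod p (insert r R) f"
  unfolding independent_mod_def
proof (rule ballI, rule impI)
  fix c assume c: "c \<in> residue_coeffs p (insert r R)" and z: "vec_mod p (lincomb c (insert r R) f) = 0"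
  have z': "[c r * f r $ j + lincomb c R f $ j = 0] (mod int p)" for j
    using z R r unfolding vec_mod_eq_0_iff by (simp add: lincomb_insert)
  have cr: "c r \<in> {0..<int p}"
    using c by (auto simp: residue_coeffs_def)
  have "c r = 0"
  proof (rule ccontr)
    assume "c r \<noteq> 0"
    then have "\<not> int p dvd c r"
      using cr by (intro zdvd_not_zless) auto
    then show False
      using in_span_mod_if_relation[OF p fr _ z'] ns by blast
  qed
  moreover have "restrict c R \<in> residue_coeffs p R"
    using c by (auto simp: residue_coeffs_def)
  moreover have "vec_mod p (lincomb (restrict c R) R f) = 0"
    using z' \<open>c r = 0\<close> unfolding vec_mod_eq_0_iff by (simp cong: lincomb_cong)
  ultimately show "\<forall>i\<in>insert r R. c i = 0"
    using ind unfolding independent_mod_def by fastforce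
qed

lemma inj_on_fun_upd_Sigma:
  assumes "r \<notin> R" "G \<subseteq> Pi\<^sub>E R T"
  shows "inj_on (\<lambda>(g, v). g(r := v)) (SIGMA g:G. X g)"
proof (rule inj_onI, clarsimp)
  fix g v g' v' assume g: "g \<in> G" "g' \<in> G" and e: "g(r := v) = g'(r := v')"
  have "v = v'"
    using fun_cong[OF e, of r] by simp
  moreover have "g r = g' r"
    using g assms by (metis PiE_arb subsetD)
  ultimately show "g = g' \<and> v = v'"
    using e by (metis fun_upd_triv fun_upd_upd)
qed

lemma independent_mod_insert_eq_image:
  assumes R: "finite R" and r: "r \<notin> R" and p: "prime p"
  defines "V \<equiv> residue_vecs p :: (int^'m::finite) set"
  shows "{f \<in> Pi\<^sub>E (insert r R) (\<lambda>_. V). independent_mod p (insert r R) f}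
           = (\<lambda>(g, v). g(r := v)) ` (SIGMA g:{g \<in> Pi\<^sub>E R (\<lambda>_. V). independent_mod p R g}. V - span_mod p R g)"
proof -
  have p1: "p > 1"
    using p prime_gt_1_nat by blast
  have upd_R: "independent_mod p R (g(r := v)) = independent_mod p R g"
    "span_mod p R (g(r := v)) = span_mod p R g" for g :: "_ \<Rightarrow> int^'m" and v
    by (rule independent_mod_cong span_mod_cong; use r in auto)+
  show ?thesis
  proof (intro equalityI subsetI)
  fix f assume "f \<in> {f \<in> Pi\<^sub>E (insert r R) (\<lambda>_. V). independent_mod p (insert r R) f}"
  then have f: "f \<in> Pi\<^sub>E (insert r R) (\<lambda>_. V)" "independent_mod p (insert r R) f"
    by auto
  have "f(r := undefined) \<in> Pi\<^sub>E R (\<lambda>_. V)" "f r \<in> V"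
    using f r by (auto simp: PiE_iff extensional_def)
  moreover have "independent_mod p R (f(r := undefined))" "f r \<notin> span_mod p R (f(r := undefined))"
    using independent_mod_insertD[OF R r prime_gt_0_nat[OF p] f(2)] independent_mod_insert_not_in_span_mod[OF R r p1 f(2)] upd_R
    by simp_all
  ultimately show "f \<in> (\<lambda>(g, v). g(r := v)) ` (SIGMA g:{g \<in> Pi\<^sub>E R (\<lambda>_. V). independent_mod p R g}. V - span_mod p R g)"
    by (intro image_eqI[where x = "(f(r := undefined), f r)"]) simp_all
next
  fix f assume "f \<in> (\<lambda>(g, v). g(r := v)) ` (SIGMA g:{g \<in> Pi\<^sub>E R (\<lambda>_. V). independent_mod p R g}. V - span_mod p R g)"
  then obtain g v where f: "f = g(r := v)" and g: "g \<in> Pi\<^sub>E R (\<lambda>_. V)" "independent_mod p R g"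
    and v: "v \<in> V" "v \<notin> span_mod p R g"
    by auto
  have "independent_mod p (insert r R) (g(r := v))"
    using independent_mod_insertI[OF R r p, of "g(r := v)"] g v upd_R by (simp add: V_def)
  then show "f \<in> {f \<in> Pi\<^sub>E (insert r R) (\<lambda>_. V). independent_mod p (insert r R) f}"
    using f g v by (auto simp: PiE_iff extensional_def)
qed
qed

text \<open>The \<open>i\<close>-th vector must avoid the \<open>p ^ i\<close> elements of the span of the previous ones.\<close>
lemma card_independent_mod:
  assumes p: "prime p" and R: "finite R"
  shows "card {f \<in> Pi\<^sub>E R (\<lambda>_. residue_vecs p :: (int^'m::finite) set). independent_mod p R f}
           = (\<Prod>i<card R. p ^ CARD('m) - p ^ i)"
  using R
proof (induction R rule: finite_induct)
  case empty
  have only_empty: "{f \<in> Pi\<^sub>E {} (\<lambda>_. residue_vecs p :: (int^'m) set). independent_mod p {} f} = {\<lambda>_. undefined}"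
    by (auto simp: independent_mod_def)
  show ?case
    by (subst only_empty) simp
next
  case (insert r R)
  let ?V = "residue_vecs p :: (int^'m) set"
  define G where "G = {g \<in> Pi\<^sub>E R (\<lambda>_. ?V). independent_mod p R g}"
  have p0: "p > 0"
    using p prime_gt_0_nat by blast
  have card_compl: "card (?V - span_mod p R g) = p ^ CARD('m) - p ^ card R" if "g \<in> G" for g
  proof -
    have "card (?V - span_mod p R g) = card ?V - card (span_mod p R g)"
      using span_mod_subset[OF p0] by (intro card_Diff_subset finite_subset[OF _ finite_residue_vecs])
    then show ?thesis
      using that insert p0 by (simp add: card_residue_vecs card_span_mod G_def)
  qed
  have "finite G"
    unfolding G_def by (rule finite_subset[of _ "Pi\<^sub>E R (\<lambda>_. ?V)"]) (auto intro!: finite_PiE simp: finite_residue_vecs insert)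
  moreover have "inj_on (\<lambda>(g, v). g(r := v)) (SIGMA g:G. ?V - span_mod p R g)"
    by (rule inj_on_fun_upd_Sigma[OF insert(2)]) (auto simp: G_def)
  ultimately have "card {f \<in> Pi\<^sub>E (insert r R) (\<lambda>_. ?V). independent_mod p (insert r R) f}
                     = (\<Sum>g\<in>G. card (?V - span_mod p R g))"
    unfolding independent_mod_insert_eq_image[OF insert(1,2) p] G_def[symmetric]
    by (simp add: card_image card_SigmaI finite_residue_vecs)
  also have "\<dots> = card G * (p ^ CARD('m) - p ^ card R)"
    by (simp add: card_compl)
  finally show ?case
    using insert by (simp add: G_def)
qed

lemma det_row_add_comb:
  fixes A :: "'a::comm_ring_1^'n::finite^'n"
  assumes T: "finite T" and j: "j \<notin> T"
  shows "det (\<chi> k. if k = j then x + (\<Sum>i\<in>T. c i *s A$i) else A$k) = det (\<chi> k. if k = j then x else A$k)"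
  using T j
proof (induction T arbitrary: x rule: finite_induct)
  case empty
  then show ?case
    by (simp only: sum.empty add_0_right)
next
  case (insert t T)
  have tj: "t \<noteq> j"
    using insert by auto
  have "x + (\<Sum>i\<in>insert t T. c i *s A$i) = (x + c t *s A$t) + (\<Sum>i\<in>T. c i *s A$i)"
    using insert(1,2) by (simp add: algebra_simps)
  then have "det (\<chi> k. if k = j then x + (\<Sum>i\<in>insert t T. c i *s A$i) else A$k)
          = det (\<chi> k. if k = j then (x + c t *s A$t) + (\<Sum>i\<in>T. c i *s A$i) else A$k)"
    by (simp only:)
  also have "\<dots> = det (\<chi> k. if k = j then x + c t *s A$t else A$k)"
    using insert by (intro insert.IH) auto
  also have "\<dots> = det (\<chi> k. if k = j then x else A$k) + c t * det (\<chi> k. if k = j then A$t else A$k)"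
    using det_row_add[of j "\<lambda>_. x" "\<lambda>_. c t *s A$t" "\<lambda>k. A$k"] det_row_mul[of j "c t" "\<lambda>_. A$t" "\<lambda>k. A$k"]
    by simp
  also have "det (\<chi> k. if k = j then A$t else A$k) = 0"
    by (rule det_identical_rows[OF tj[symmetric]]) (simp add: row_def vec_eq_iff tj)
  finally show ?case
    by simp
qed

lemma dependent_mod_imp_dvd_det:
  fixes A :: "int^'n::finite^'n"
  assumes p: "prime p" and dep: "\<not> independent_mod p UNIV (\<lambda>i. A$i)"
  shows "int p dvd det A"
proof -
  obtain c j where c: "c \<in> residue_coeffs p UNIV" and z: "vec_mod p (lincomb c UNIV (\<lambda>i. A$i)) = 0"
    and cj: "c j \<noteq> 0"
    using dep unfolding independent_mod_def by blast
  define M where "M = (\<chi> k. if k = j then lincomb c UNIV (\<lambda>i. A$i) else A$k)"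
  have split_j: "lincomb c UNIV (\<lambda>i. A$i) = c j *s A$j + (\<Sum>i\<in>UNIV-{j}. c i *s A$i)"
    unfolding lincomb_def by (simp add: sum.remove)
  have "det M = det (\<chi> k. if k = j then c j *s A$j else A$k)"
    unfolding M_def split_j by (rule det_row_add_comb) auto
  also have "\<dots> = c j * det (\<chi> k. if k = j then A$j else A$k)"
    using det_row_mul[of j "c j" "\<lambda>_. A$j" "\<lambda>k. A$k"] by simp
  also have "(\<chi> k. if k = j then A$j else A$k) = A"
    by (simp add: vec_eq_iff)
  finally have "det M = c j * det A" .
  moreover have "[det M = det ((\<chi> k. if k = j then 0 else A$k) :: int^'n^'n)] (mod int p)"
    using z unfolding vec_mod_eq_0_iff by (intro cong_det) (simp add: M_def)
  moreover have "det ((\<chi> k. if k = j then 0 else A$k) :: int^'n^'n) = 0"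
    by (rule det_row_0)
  moreover have "\<not> int p dvd c j"
    using c cj by (intro zdvd_not_zless) (auto simp: residue_coeffs_def PiE_iff le_less)
  ultimately show ?thesis
    using p by (metis cong_0_iff prime_dvd_mult_iff prime_nat_int_transfer)
qed

text \<open>If the rows span everything mod \<open>p\<close>, some integer matrix \<open>B\<close> has \<open>B A \<equiv> 1 (mod p)\<close>.\<close>
lemma independent_mod_imp_not_dvd_det:
  fixes A :: "int^'n::finite^'n"
  assumes p: "prime p" and ind: "independent_mod p UNIV (\<lambda>i. A$i)"
  shows "\<not> int p dvd det A"
proof
  assume dvd: "int p dvd det A"
  have p0: "p > 0" and p1: "int p > 1"
    using p prime_gt_1_nat by (auto simp: prime_gt_0_nat)
  have "card (span_mod p UNIV (\<lambda>i. A$i)) = p ^ CARD('n)"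
    using card_span_mod[OF _ ind p0] by simp
  then have span_all: "span_mod p UNIV (\<lambda>i. A$i) = residue_vecs p"
    by (intro card_subset_eq) (auto simp: finite_residue_vecs card_residue_vecs span_mod_subset[OF p0])
  define e where "e k = ((\<chi> l. of_bool (l = k)) :: int^'n)" for k
  have "\<forall>k. \<exists>c \<in> residue_coeffs p UNIV. vec_mod p (lincomb c UNIV (\<lambda>i. A$i)) = e k"
  proof
    fix k
    have "e k \<in> span_mod p UNIV (\<lambda>i. A$i)"
      unfolding span_all using p1 by (simp add: e_def residue_vecs_def)
    then show "\<exists>c \<in> residue_coeffs p UNIV. vec_mod p (lincomb c UNIV (\<lambda>i. A$i)) = e k"
      unfolding span_mod_def by auto
  qed
  then obtain C where C: "\<And>k. vec_mod p (lincomb (C k) UNIV (\<lambda>i. A$i)) = e k"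
    by metis
  define B :: "int^'n^'n" where "B = (\<chi> k i. C k i)"
  have "[det (B ** A) = det (mat 1 :: int^'n^'n)] (mod int p)"
  proof (rule cong_det)
    fix k l
    have "(B ** A)$k$l mod int p = e k $ l"
      using arg_cong[OF C[of k], of "\<lambda>v. v $ l"]
      by (simp add: B_def matrix_matrix_mult_def lincomb_nth vec_mod_def)
    then show "[(B ** A)$k$l = (mat 1 :: int^'n^'n)$k$l] (mod int p)"
      using p1 by (simp add: cong_def e_def mat_def)
  qed
  then have "[det B * det A = 1] (mod int p)"
    by (simp add: det_mul)
  moreover have "[det B * det A = 0] (mod int p)"
    using dvd by (simp add: cong_0_iff)
  ultimately have "[1 = 0] (mod int p)"
    by (metis cong_sym cong_trans)
  then show False
    using p1 by (simp add: cong_def)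
qed

section \<open>Singular matrices modulo a squarefree number\<close>

definition residue_mats :: "nat \<Rightarrow> (int^'n::finite^'n) set" where
  "residue_mats d = {A. \<forall>i j. A$i$j \<in> {0..<int d}}"

definition mat_mod :: "nat \<Rightarrow> int^'n::finite^'n \<Rightarrow> int^'n^'n" where
  "mat_mod d A = (\<chi> i j. A$i$j mod int d)"

definition singular_mod_count :: "'n::finite itself \<Rightarrow> nat \<Rightarrow> nat" where
  "singular_mod_count _ d = card {A \<in> (residue_mats d :: (int^'n^'n) set). int d dvd det A}"

lemma finite_residue_mats: "finite (residue_mats d)"
  unfolding residue_mats_def by (rule finite_mat_set) auto

lemma card_residue_mats: "card (residue_mats d :: (int^'n::finite^'n) set) = d ^ (CARD('n) * CARD('n))"
  unfolding residue_mats_def by (subst card_mat_set_const) auto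

lemma mat_mod_in_residue_mats: "d > 0 \<Longrightarrow> mat_mod d A \<in> residue_mats d"
  by (simp add: mat_mod_def residue_mats_def)

lemma dvd_det_mat_mod_iff: "int d dvd det (mat_mod d A) \<longleftrightarrow> int d dvd det A"
proof -
  have "[det (mat_mod d A) = det A] (mod int d)"
    by (rule cong_det) (simp add: mat_mod_def cong_def)
  then show ?thesis
    by (simp add: cong_dvd_iff)
qed

lemma card_nonsingular_mod_prime:
  assumes p: "prime p"
  shows "card {A \<in> residue_mats p :: (int^'n::finite^'n) set. \<not> int p dvd det A}
           = (\<Prod>i<CARD('n). p ^ CARD('n) - p ^ i)"
proof -
  have "{A \<in> residue_mats p :: (int^'n^'n) set. \<not> int p dvd det A}
          = {A \<in> residue_mats p. independent_mod p UNIV (vec_nth A)}"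
    using dependent_mod_imp_dvd_det[OF p] independent_mod_imp_not_dvd_det[OF p] by blast
  moreover have "bij_betw vec_nth {A \<in> residue_mats p :: (int^'n^'n) set. independent_mod p UNIV (vec_nth A)}
                   {f \<in> Pi\<^sub>E UNIV (\<lambda>_. residue_vecs p). independent_mod p UNIV f}"
    by (rule bij_betwI[where g = vec_lambda]) (auto simp: residue_mats_def residue_vecs_def vec_lambda_inverse PiE_iff)
  ultimately show ?thesis
    using card_independent_mod[OF p, of "UNIV :: 'n set"] by (simp add: bij_betw_same_card)
qed

lemma singular_mod_count_prime:
  assumes p: "prime p"
  shows "singular_mod_count TYPE('n::finite) p
           = p ^ (CARD('n) * CARD('n)) - (\<Prod>i<CARD('n). p ^ CARD('n) - p ^ i)"
proof -
  let ?M = "residue_mats p :: (int^'n^'n) set"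
  have "?M = {A \<in> ?M. int p dvd det A} \<union> {A \<in> ?M. \<not> int p dvd det A}"
    by auto
  then have "card ?M = card {A \<in> ?M. int p dvd det A} + card {A \<in> ?M. \<not> int p dvd det A}"
    by (subst card_Un_disjoint[symmetric]) (auto simp: finite_residue_mats)
  moreover have "card {A \<in> ?M. \<not> int p dvd det A} = (\<Prod>i<CARD('n). p ^ CARD('n) - p ^ i)"
    by (rule card_nonsingular_mod_prime[OF p])
  moreover have "card ?M = p ^ (CARD('n) * CARD('n))"
    by (rule card_residue_mats)
  ultimately show ?thesis
    unfolding singular_mod_count_def by simp
qed

lemma bij_betw_mat_mod_pair:
  assumes cop: "coprime a b" and a: "a > 0" and b: "b > 0"
  shows "bij_betw (\<lambda>A. (mat_mod a A, mat_mod b A)) (residue_mats (a * b) :: (int^'n::finite^'n) set)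
           (residue_mats a \<times> residue_mats b)"
proof -
  let ?f = "\<lambda>A::int^'n^'n. (mat_mod a A, mat_mod b A)"
  have "inj_on ?f (residue_mats (a * b))"
  proof
    fix A A' :: "int^'n^'n"
    assume A: "A \<in> residue_mats (a*b)" and A': "A' \<in> residue_mats (a*b)" and e: "?f A = ?f A'"
    have "A$i$j = A'$i$j" for i j
    proof -
      have "[A$i$j = A'$i$j] (mod int a)" "[A$i$j = A'$i$j] (mod int b)"
        using e by (auto simp: mat_mod_def vec_eq_iff cong_def)
      then have "[A$i$j = A'$i$j] (mod int a * int b)"
        using cop by (simp add: coprime_cong_mult)
      then show ?thesis
        using A A' by (simp add: cong_def residue_mats_def)
    qed
    then show "A = A'"
      by (simp add: vec_eq_iff)
  qed
  moreover have "?f ` residue_mats (a * b) = residue_mats a \<times> residue_mats b"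
  proof (rule card_subset_eq)
    show "?f ` residue_mats (a * b) \<subseteq> residue_mats a \<times> residue_mats b"
      using a b by (auto simp: mat_mod_in_residue_mats)
    have "card (residue_mats (a * b) :: (int^'n^'n) set)
            = card (residue_mats a :: (int^'n^'n) set) * card (residue_mats b :: (int^'n^'n) set)"
      by (simp add: card_residue_mats power_mult_distrib)
    then show "card (?f ` residue_mats (a * b)) = card (residue_mats a \<times> residue_mats b :: ((int^'n^'n) \<times> (int^'n^'n)) set)"
      using \<open>inj_on ?f _\<close> by (simp add: card_image card_cartesian_product)
  qed (simp add: finite_residue_mats)
  ultimately show ?thesis
    unfolding bij_betw_def ..
qed

lemma singular_mod_count_mult:
  assumes cop: "coprime a b" and a: "a > 0" and b: "b > 0"
  shows "singular_mod_count TYPE('n::finite) (a * b) = singular_mod_count TYPE('n) a * singular_mod_count TYPE('n) b"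
proof -
  let ?f = "\<lambda>A::int^'n^'n. (mat_mod a A, mat_mod b A)"
  let ?T = "{A \<in> residue_mats a :: (int^'n^'n) set. int a dvd det A} \<times> {A \<in> residue_mats b :: (int^'n^'n) set. int b dvd det A}"
  have bij: "bij_betw ?f (residue_mats (a * b)) (residue_mats a \<times> residue_mats b)"
    by (rule bij_betw_mat_mod_pair[OF cop a b])
  have "int (a * b) dvd det A \<longleftrightarrow> int a dvd det (mat_mod a A) \<and> int b dvd det (mat_mod b A)" for A :: "int^'n^'n"
    using cop by (auto simp: dvd_det_mat_mod_iff divides_mult intro: dvd_mult_left dvd_mult_right)
  then have "{A \<in> residue_mats (a * b). int (a * b) dvd det A} = {A \<in> residue_mats (a * b). ?f A \<in> ?T}"
    using a b by (auto simp: mat_mod_in_residue_mats)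
  moreover have "?f ` {A \<in> residue_mats (a * b). ?f A \<in> ?T} = ?T"
  proof (intro equalityI subsetI)
    fix y assume "y \<in> ?T"
    moreover have "y \<in> ?f ` residue_mats (a * b)"
      using \<open>y \<in> ?T\<close> bij unfolding bij_betw_def by auto
    then obtain A where "A \<in> residue_mats (a * b)" "y = ?f A"
      by blast
    ultimately show "y \<in> ?f ` {A \<in> residue_mats (a * b). ?f A \<in> ?T}"
      by blast
  qed auto
  ultimately have "bij_betw ?f {A \<in> residue_mats (a * b). int (a * b) dvd det A} ?T"
    by (intro bij_betw_subset[OF bij]) auto
  then show ?thesis
    unfolding singular_mod_count_def by (simp add: bij_betw_same_card card_cartesian_product)
qed

lemma singular_mod_count_prod_primes:
  assumes "finite S" "\<And>p. p \<in> S \<Longrightarrow> prime p"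
  shows "singular_mod_count TYPE('n::finite) (\<Prod>S) = (\<Prod>p\<in>S. singular_mod_count TYPE('n) p)"
  using assms
proof (induction S rule: finite_induct)
  case empty
  have "{A \<in> (residue_mats 1 :: (int^'n^'n) set). int 1 dvd det A} = residue_mats 1"
    by auto
  then show ?case
    by (simp add: singular_mod_count_def card_residue_mats)
next
  case (insert p S)
  have "coprime p (\<Prod>S)"
    using insert by (intro prod_coprime_right) (metis insertCI primes_coprime)
  moreover have "\<Prod>S > 0" "p > 0"
    using insert by (auto simp: prime_gt_0_nat intro!: prod_pos)
  ultimately show ?case
    using insert by (simp add: singular_mod_count_mult)
qed

section \<open>Equidistribution of the box modulo d\<close>

lemma affine_ge_iff_ceiling_le:
  fixes a d k r :: int
  assumes "d > 0"
  shows "a \<le> r + d*k \<longleftrightarrow> \<lceil>real_of_int (a - r) / d\<rceil> \<le> k"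
proof -
  have "\<lceil>real_of_int (a - r) / d\<rceil> \<le> k \<longleftrightarrow> real_of_int (a - r) \<le> k * d"
    using assms by (simp add: ceiling_le_iff pos_divide_le_eq)
  also have "\<dots> \<longleftrightarrow> a \<le> r + d*k"
    by (simp add: algebra_simps flip: of_int_mult of_int_diff of_int_add)
  finally show ?thesis
    by simp
qed

lemma affine_le_iff_le_floor:
  fixes b d k r :: int
  assumes "d > 0"
  shows "r + d*k \<le> b \<longleftrightarrow> k \<le> \<lfloor>real_of_int (b - r) / d\<rfloor>"
proof -
  have "k \<le> \<lfloor>real_of_int (b - r) / d\<rfloor> \<longleftrightarrow> k * d \<le> real_of_int (b - r)"
    using assms by (simp add: le_floor_iff pos_le_divide_eq)
  also have "\<dots> \<longleftrightarrow> r + d*k \<le> b"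
    by (simp add: algebra_simps flip: of_int_mult of_int_diff of_int_add)
  finally show ?thesis
    by simp
qed

lemma card_residue_class_Icc:
  fixes a b d r :: int
  assumes d: "d > 0" and r: "0 \<le> r" "r < d"
  shows "card {x\<in>{a..b}. x mod d = r} = nat (\<lfloor>real_of_int (b - r) / d\<rfloor> - \<lceil>real_of_int (a - r) / d\<rceil> + 1)"
proof -
  define L where "L = \<lceil>real_of_int (a - r) / d\<rceil>"
  define U where "U = \<lfloor>real_of_int (b - r) / d\<rfloor>"
  note lower = affine_ge_iff_ceiling_le[OF d, of a r, folded L_def]
  note upper = affine_le_iff_le_floor[OF d, of r _ b, folded U_def]
  have "{x\<in>{a..b}. x mod d = r} = (\<lambda>k. r + d*k) ` {L..U}"
  proof (intro equalityI subsetI)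
    fix x assume x: "x \<in> {x\<in>{a..b}. x mod d = r}"
    then have "x mod d = r"
      by simp
    then have "x = r + d * (x div d)"
      by (metis div_mult_mod_eq mult.commute add.commute)
    then show "x \<in> (\<lambda>k. r + d*k) ` {L..U}"
      using x lower[of "x div d"] upper[of "x div d"] by (intro image_eqI[of x _ "x div d"]) auto
  next
    fix x assume "x \<in> (\<lambda>k. r + d*k) ` {L..U}"
    then show "x \<in> {x\<in>{a..b}. x mod d = r}"
      using lower upper r by auto
  qed
  moreover have "inj (\<lambda>k. r + d*k)"
    using d by (auto simp: inj_def)
  ultimately show ?thesis
    unfolding L_def U_def by (simp add: card_image inj_on_subset)
qed

lemma card_residue_class_Icc_approx:
  fixes a b d r :: int
  assumes d: "d > 0" and r: "0 \<le> r" "r < d" and ab: "a \<le> b"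
  shows "\<bar>real (card {x\<in>{a..b}. x mod d = r}) - real_of_int (b - a) / d\<bar> \<le> 1"
proof -
  define u where "u = real_of_int (b - r) / d"
  define v where "v = real_of_int (a - r) / d"
  have "u - v = real_of_int (b - a) / d"
    by (simp add: u_def v_def diff_divide_distrib)
  moreover have "0 \<le> real_of_int (b - a) / d"
    using ab d by simp
  moreover have "real (nat (\<lfloor>u\<rfloor> - \<lceil>v\<rceil> + 1)) = max 0 (real_of_int \<lfloor>u\<rfloor> - real_of_int \<lceil>v\<rceil> + 1)"
    by linarith
  ultimately show ?thesis
    unfolding card_residue_class_Icc[OF assms(1-3)] u_def[symmetric] v_def[symmetric]
    by linarith
qed

lemma abs_prod_minus_power_le:
  fixes a :: "'i \<Rightarrow> real"
  assumes "finite I" "\<And>i. i \<in> I \<Longrightarrow> 0 \<le> a i" "\<And>i. i \<in> I \<Longrightarrow> \<bar>a i - X\<bar> \<le> e" "X \<ge> 0"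
  shows "\<bar>(\<Prod>i\<in>I. a i) - X ^ card I\<bar> \<le> (X + e) ^ card I - X ^ card I"
  using assms
proof (induction I rule: finite_induct)
  case empty
  then show ?case
    by simp
next
  case (insert i I)
  let ?b = "\<Prod>i\<in>I. a i"
  have IH: "\<bar>?b - X ^ card I\<bar> \<le> (X + e) ^ card I - X ^ card I"
    using insert by auto
  have b0: "?b \<ge> 0"
    using insert by (auto intro: prod_nonneg)
  have bb: "?b \<le> (X + e) ^ card I"
    using IH by linarith
  have ai: "\<bar>a i - X\<bar> \<le> e"
    using insert by auto
  have "\<bar>a i * ?b - X * X ^ card I\<bar> = \<bar>(a i - X) * ?b + X * (?b - X ^ card I)\<bar>"
    by (simp add: algebra_simps)
  also have "\<dots> \<le> \<bar>a i - X\<bar> * ?b + X * \<bar>?b - X ^ card I\<bar>"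
    using b0 insert(6) by (simp add: abs_mult abs_triangle_ineq[THEN order_trans])
  also have "\<dots> \<le> e * (X + e) ^ card I + X * ((X + e) ^ card I - X ^ card I)"
    using ai b0 bb IH insert(6) by (intro add_mono mult_mono mult_left_mono) auto
  also have "\<dots> = (X + e) ^ Suc (card I) - X ^ Suc (card I)"
    by (simp add: algebra_simps)
  finally show ?case
    using insert by simp
qed

lemma power_add_diff_le:
  fixes X e :: real
  assumes "X \<ge> 0" "e \<ge> 0"
  shows "(X + e) ^ k - X ^ k \<le> e * k * (X + e) ^ (k - 1)"
proof (induction k)
  case 0
  then show ?case
    by simp
next
  case (Suc k)
  have "(X + e) ^ Suc k - X ^ Suc k = (X + e) * ((X + e) ^ k - X ^ k) + e * X ^ k"
    by (simp add: algebra_simps)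
  also have "\<dots> \<le> (X + e) * (e * k * (X + e) ^ (k - 1)) + e * (X + e) ^ k"
    using Suc assms by (intro add_mono mult_left_mono power_mono) auto
  also have "\<dots> = e * Suc k * (X + e) ^ k"
    by (cases k) (simp_all add: algebra_simps)
  finally show ?case
    by simp
qed

lemma card_int_matrices_bounded_dvd_det:
  assumes d: "d > 0"
  shows "card {A \<in> int_matrices_bounded H :: (int^'n::finite^'n) set. int d dvd det A}
           = (\<Sum>C\<in>{C \<in> residue_mats d :: (int^'n^'n) set. int d dvd det C}.
                card {A \<in> int_matrices_bounded H. mat_mod d A = C})"
proof -
  have "{A \<in> int_matrices_bounded H :: (int^'n^'n) set. int d dvd det A}
          = (\<Union>C\<in>{C \<in> residue_mats d :: (int^'n^'n) set. int d dvd det C}. {A \<in> int_matrices_bounded H. mat_mod d A = C})"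
    using d by (auto simp: mat_mod_in_residue_mats dvd_det_mat_mod_iff)
  also have "card \<dots> = (\<Sum>C\<in>{C \<in> residue_mats d :: (int^'n^'n) set. int d dvd det C}.
                               card {A \<in> int_matrices_bounded H. mat_mod d A = C})"
    by (rule card_UN_disjoint) (auto simp: finite_residue_mats finite_int_matrices_bounded)
  finally show ?thesis .
qed

lemma card_int_matrices_bounded_mat_mod_eq:
  "card {A \<in> int_matrices_bounded H :: (int^'n::finite^'n) set. mat_mod d A = C}
     = (\<Prod>ij\<in>UNIV. card {x\<in>{-H..H}. x mod int d = C $ fst ij $ snd ij})"
proof -
  define S where "S i j = {x\<in>{-H..H}. x mod int d = C$i$j}" for i j
  have "{A \<in> int_matrices_bounded H :: (int^'n^'n) set. mat_mod d A = C} = {A. \<forall>i j. A$i$j \<in> S i j}"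
    unfolding int_matrices_bounded_eq S_def by (auto simp: mat_mod_def vec_eq_iff)
  also have "card \<dots> = (\<Prod>i\<in>UNIV. \<Prod>j\<in>UNIV. card (S i j))"
    by (rule card_mat_set) (auto simp: S_def intro: finite_subset[of _ "{-H..H}"])
  finally show ?thesis
    by (simp add: S_def prod.cartesian_product split_beta UNIV_Times_UNIV[symmetric] del: UNIV_Times_UNIV)
qed

text \<open>Each residue class mod \<open>d\<close> has \<open>(2H + 1)/d + O(1)\<close> representatives in \<open>[-H, H]\<close>.\<close>
lemma card_int_matrices_bounded_mat_mod_eq_approx:
  assumes d: "d > 0" and H: "H \<ge> 0" and C: "C \<in> residue_mats d"
  defines "X \<equiv> real_of_int (2*H+1) / real d"
  shows "\<bar>real (card {A \<in> int_matrices_bounded H :: (int^'n::finite^'n) set. mat_mod d A = C}) - X ^ (CARD('n)*CARD('n))\<bar>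
           \<le> (X + 2) ^ (CARD('n)*CARD('n)) - X ^ (CARD('n)*CARD('n))"
proof -
  define a where "a ij = real (card {x\<in>{-H..H}. x mod int d = C $ fst ij $ snd ij})" for ij :: "'n \<times> 'n"
  have close: "\<bar>a ij - X\<bar> \<le> 2" for ij
  proof -
    have "0 \<le> C $ fst ij $ snd ij" "C $ fst ij $ snd ij < int d"
      using C by (auto simp: residue_mats_def)
    then have "\<bar>a ij - real_of_int (H - (-H)) / real_of_int (int d)\<bar> \<le> 1"
      unfolding a_def using d H by (intro card_residue_class_Icc_approx) auto
    moreover have "X = real_of_int (H - (-H)) / real_of_int (int d) + 1 / real d"
      by (simp add: X_def add_divide_distrib)
    moreover have "0 \<le> 1 / real d" "1 / real d \<le> 1"
      using d by simp_all
    ultimately show ?thesis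
      by linarith
  qed
  have "X \<ge> 0"
    using H by (simp add: X_def)
  then have "\<bar>(\<Prod>ij\<in>UNIV. a ij) - X ^ card (UNIV :: ('n \<times> 'n) set)\<bar>
               \<le> (X + 2) ^ card (UNIV :: ('n \<times> 'n) set) - X ^ card (UNIV :: ('n \<times> 'n) set)"
    by (intro abs_prod_minus_power_le close) (simp_all add: a_def)
  then show ?thesis
    unfolding card_int_matrices_bounded_mat_mod_eq a_def by simp
qed

lemma card_int_matrices_bounded_dvd_det_approx:
  assumes d: "d > 0" and H: "H \<ge> 0"
  defines "X \<equiv> real_of_int (2*H+1) / real d"
  shows "\<bar>real (card {A \<in> int_matrices_bounded H :: (int^'n::finite^'n) set. int d dvd det A})
             - real (singular_mod_count TYPE('n) d) * X ^ (CARD('n)*CARD('n))\<bar>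
           \<le> real (singular_mod_count TYPE('n) d) * ((X + 2) ^ (CARD('n)*CARD('n)) - X ^ (CARD('n)*CARD('n)))"
proof -
  let ?SC = "{C \<in> residue_mats d :: (int^'n^'n) set. int d dvd det C}"
  let ?m = "CARD('n)*CARD('n)"
  let ?F = "\<lambda>C. real (card {A \<in> int_matrices_bounded H :: (int^'n^'n) set. mat_mod d A = C})"
  have "\<bar>real (card {A \<in> int_matrices_bounded H :: (int^'n^'n) set. int d dvd det A})
            - real (singular_mod_count TYPE('n) d) * X ^ ?m\<bar> = \<bar>\<Sum>C\<in>?SC. ?F C - X ^ ?m\<bar>"
    by (simp add: card_int_matrices_bounded_dvd_det[OF d] singular_mod_count_def sum_subtractf)
  also have "\<dots> \<le> (\<Sum>C\<in>?SC. (X + 2) ^ ?m - X ^ ?m)"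
    using card_int_matrices_bounded_mat_mod_eq_approx[OF d H, where 'n='n]
    unfolding X_def by (intro order_trans[OF sum_abs sum_mono]) blast
  also have "\<dots> = real (singular_mod_count TYPE('n) d) * ((X + 2) ^ ?m - X ^ ?m)"
    by (simp add: singular_mod_count_def)
  finally show ?thesis .
qed

section \<open>Local densities and Rankin's trick\<close>

definition sing_density :: "'n::finite itself \<Rightarrow> nat \<Rightarrow> real" where
  "sing_density T d = real (singular_mod_count T d) / real d ^ (CARD('n) * CARD('n))"

lemma sing_density_prod_primes:
  assumes "finite S" "\<And>p. p \<in> S \<Longrightarrow> prime p"
  shows "sing_density TYPE('n::finite) (\<Prod>S) = (\<Prod>p\<in>S. sing_density TYPE('n) p)"
  using singular_mod_count_prod_primes[OF assms, where 'n='n]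
  unfolding sing_density_def by (simp add: prod_dividef prod_power_distrib)

lemma sing_density_prime:
  assumes p: "prime p"
  shows "sing_density TYPE('n::finite) p = 1 - (\<Prod>i<CARD('n). 1 - 1 / real p ^ (CARD('n) - i))"
proof -
  let ?n = "CARD('n)"
  have p0: "real p > 0"
    using p prime_gt_0_nat by simp
  have le: "(\<Prod>i<?n. p ^ ?n - p ^ i) \<le> p ^ (?n * ?n)"
    using prod_mono[of "{..<?n}" "\<lambda>i. p ^ ?n - p ^ i" "\<lambda>_. p ^ ?n"]
    by (simp add: power_mult[symmetric] mult.commute)
  have pow_le: "p ^ i \<le> p ^ ?n" if "i < ?n" for i
    using that prime_ge_1_nat[OF p] by (intro power_increasing) auto
  have "real (singular_mod_count TYPE('n) p) = real p ^ (?n * ?n) - (\<Prod>i<?n. real p ^ ?n - real p ^ i)"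
    using le pow_le by (simp add: singular_mod_count_prime[OF p] of_nat_diff of_nat_prod)
  moreover have "(\<Prod>i<?n. real p ^ ?n - real p ^ i) / real p ^ (?n * ?n) = (\<Prod>i<?n. 1 - 1 / real p ^ (?n - i))"
  proof -
    have "(\<Prod>i<?n. real p ^ ?n - real p ^ i) / real p ^ (?n * ?n) = (\<Prod>i<?n. (real p ^ ?n - real p ^ i) / real p ^ ?n)"
      by (simp add: prod_dividef power_mult[symmetric] mult.commute)
    also have "\<dots> = (\<Prod>i<?n. 1 - 1 / real p ^ (?n - i))"
    proof (rule prod.cong[OF refl])
      fix i assume "i \<in> {..<?n}"
      then have "real p ^ ?n = real p ^ i * real p ^ (?n - i)"
        by (simp flip: power_add)
      then show "(real p ^ ?n - real p ^ i) / real p ^ ?n = 1 - 1 / real p ^ (?n - i)"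
        using p0 by (simp add: divide_simps algebra_simps)
    qed
    finally show ?thesis .
  qed
  ultimately show ?thesis
    unfolding sing_density_def using p0 by (simp add: diff_divide_distrib)
qed

lemma sigma_factor_eq_sing_density:
  assumes p: "prime p"
  shows "sigma_factor CARD('n::finite) p = 1 - sing_density TYPE('n) p / real p"
proof -
  let ?n = "CARD('n)"
  define Q where "Q = (\<Prod>j\<in>{2..?n}. 1 - 1 / real p ^ j)"
  have "(\<Prod>i<?n. 1 - 1 / real p ^ (?n - i)) = (\<Prod>j\<in>{1..?n}. 1 - 1 / real p ^ j)"
    by (rule prod.reindex_bij_witness[where i = "\<lambda>j. ?n - j" and j = "\<lambda>i. ?n - i"]) auto
  also have "{1..?n} = insert 1 {2..?n}"
    using finite_UNIV_card_ge_0[where 'a='n] by auto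
  finally have prod_eq: "(\<Prod>i<?n. 1 - 1 / real p ^ (?n - i)) = (1 - 1 / real p) * Q"
    by (simp add: Q_def)
  show ?thesis
    unfolding sigma_factor_def sing_density_prime[OF p] prod_eq Q_def[symmetric] using prime_gt_0_nat[OF p]
    by (simp add: field_simps)
qed

lemma one_minus_prod_le_sum:
  fixes x :: "'i \<Rightarrow> real"
  assumes "finite I" "\<And>i. i \<in> I \<Longrightarrow> 0 \<le> x i \<and> x i \<le> 1"
  shows "1 - (\<Prod>i\<in>I. 1 - x i) \<le> (\<Sum>i\<in>I. x i)"
  using assms
proof (induction I rule: finite_induct)
  case empty
  then show ?case
    by simp
next
  case (insert j I)
  have "0 \<le> (\<Prod>i\<in>I. 1 - x i)" "(\<Prod>i\<in>I. 1 - x i) \<le> 1"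
    using insert by (auto intro!: prod_nonneg prod_le_1)
  moreover have "0 \<le> x j" "x j \<le> 1"
    using insert by auto
  ultimately have "(1 - (\<Prod>i\<in>I. 1 - x i)) + x j * (\<Prod>i\<in>I. 1 - x i) \<le> (\<Sum>i\<in>I. x i) + x j"
    using insert by (intro add_mono) (auto intro: mult_left_le)
  then show ?case
    using insert by (simp add: algebra_simps)
qed

lemma sing_density_prime_bounds:
  assumes p: "prime p"
  shows "0 \<le> sing_density TYPE('n::finite) p" "sing_density TYPE('n) p \<le> real CARD('n) / real p"
proof -
  show "0 \<le> sing_density TYPE('n::finite) p"
    by (simp add: sing_density_def)
  let ?n = "CARD('n)"
  have p1: "real p \<ge> 1"
    using p prime_ge_1_nat by simp
  have x: "0 \<le> 1 / real p ^ (?n - i) \<and> 1 / real p ^ (?n - i) \<le> 1 / real p" if "i < ?n" for i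
    using that p1 power_increasing[of 1 "?n - i" "real p"] by (simp add: frac_le)
  have "sing_density TYPE('n) p \<le> (\<Sum>i<?n. 1 / real p ^ (?n - i))"
    unfolding sing_density_prime[OF p]
    by (rule one_minus_prod_le_sum) (use x p1 in \<open>auto simp: divide_le_eq_1\<close>)
  also have "\<dots> \<le> (\<Sum>i<?n. 1 / real p)"
    by (rule sum_mono) (use x in auto)
  finally show "sing_density TYPE('n) p \<le> real ?n / real p"
    by simp
qed

definition zeta_sum :: "real \<Rightarrow> real" where
  "zeta_sum \<delta> = (\<Sum>k. real k powr (-1-\<delta>))"

lemma sum_powr_le_zeta_sum:
  assumes "finite P" "\<delta> > 0"
  shows "(\<Sum>p\<in>P. real p powr (-1-\<delta>)) \<le> zeta_sum \<delta>"
proof -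
  have "summable (\<lambda>k::nat. real k powr (-1-\<delta>))"
    using assms(2) by (subst summable_real_powr_iff) auto
  then show ?thesis
    unfolding zeta_sum_def by (rule sum_le_suminf[OF _ assms(1)]) auto
qed

text \<open>Rankin's trick: the subset sums below are bounded termwise by this one, which factors as
  \<open>\<Prod>p\<in>P. 1 + c * p powr (-1-\<delta>)\<close>.\<close>
lemma sum_subsets_prod_powr_le_exp:
  fixes c \<delta> :: real
  assumes P: "finite P" and c: "c \<ge> 0" and \<delta>: "\<delta> > 0"
  shows "(\<Sum>S\<in>Pow P. \<Prod>p\<in>S. c * real p powr (-1-\<delta>)) \<le> exp (c * zeta_sum \<delta>)"
proof -
  have "(\<Sum>S\<in>Pow P. \<Prod>p\<in>S. c * real p powr (-1-\<delta>)) = (\<Prod>p\<in>P. 1 + c * real p powr (-1-\<delta>))"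
    using prod_add[OF P, of "\<lambda>p. c * real p powr (-1-\<delta>)" "\<lambda>_. 1"] by (simp add: add.commute)
  also have "\<dots> \<le> (\<Prod>p\<in>P. exp (c * real p powr (-1-\<delta>)))"
    using c by (intro prod_mono) (auto simp: add.commute)
  also have "\<dots> = exp (c * (\<Sum>p\<in>P. real p powr (-1-\<delta>)))"
    using P by (simp add: exp_sum sum_distrib_left)
  also have "\<dots> \<le> exp (c * zeta_sum \<delta>)"
    using sum_powr_le_zeta_sum[OF P \<delta>] c by (simp add: mult_left_mono)
  finally show ?thesis .
qed

lemma prod_const_times_powr:
  assumes "finite S" "0 \<notin> S"
  shows "(\<Prod>p\<in>S. c * real p powr a) = c ^ card S * real (\<Prod>S) powr a"
  using assms by (simp add: prod.distrib prod_powr_distrib)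

lemma sum_subsets_small_prod_le:
  fixes c \<delta> D :: real
  assumes P: "finite P" "0 \<notin> P" and c: "c \<ge> 0" and \<delta>: "\<delta> > 0"
  shows "(\<Sum>S | S \<subseteq> P \<and> real (\<Prod>S) \<le> D. c ^ card S / real (\<Prod>S)) \<le> D powr \<delta> * exp (c * zeta_sum \<delta>)"
proof -
  have term_le: "c ^ card S / real (\<Prod>S) \<le> D powr \<delta> * (\<Prod>p\<in>S. c * real p powr (-1-\<delta>))"
    if S: "S \<subseteq> P" "real (\<Prod>S) \<le> D" for S
  proof -
    have finS: "finite S" and S0: "0 \<notin> S"
      using S P finite_subset by auto
    define N where "N = real (\<Prod>S)"
    have N0: "N > 0"
      using S0 by (auto simp: N_def intro!: prod_pos intro: gr0I)
    have "1 \<le> D powr \<delta> * N powr (-\<delta>)"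
      using S N0 \<delta> powr_mono2[of \<delta> N D] by (simp add: N_def powr_minus divide_simps)
    then have "c ^ card S / N \<le> D powr \<delta> * N powr (-\<delta>) * (c ^ card S / N)"
      using c N0 mult_right_mono[of 1 "D powr \<delta> * N powr (-\<delta>)" "c ^ card S / N"] by simp
    also have "\<dots> = D powr \<delta> * (c ^ card S * N powr (-1-\<delta>))"
      using N0 by (simp add: powr_diff powr_minus divide_simps flip: powr_add)
    finally show ?thesis
      unfolding prod_const_times_powr[OF finS S0] N_def .
  qed
  have "(\<Sum>S | S \<subseteq> P \<and> real (\<Prod>S) \<le> D. c ^ card S / real (\<Prod>S))
          \<le> (\<Sum>S | S \<subseteq> P \<and> real (\<Prod>S) \<le> D. D powr \<delta> * (\<Prod>p\<in>S. c * real p powr (-1-\<delta>)))"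
    using term_le by (intro sum_mono) auto
  also have "\<dots> \<le> (\<Sum>S\<in>Pow P. D powr \<delta> * (\<Prod>p\<in>S. c * real p powr (-1-\<delta>)))"
    using P c by (intro sum_mono2) (auto intro!: mult_nonneg_nonneg prod_nonneg)
  also have "\<dots> \<le> D powr \<delta> * exp (c * zeta_sum \<delta>)"
    unfolding sum_distrib_left[symmetric]
    by (intro mult_left_mono sum_subsets_prod_powr_le_exp P c \<delta>) simp
  finally show ?thesis .
qed

lemma sum_subsets_large_prod_le:
  fixes c \<delta> D :: real
  assumes P: "finite P" "0 \<notin> P" and c: "c \<ge> 0" and \<delta>: "\<delta> > 0" "\<delta> < 1" and D: "D > 0"
  shows "(\<Sum>S | S \<subseteq> P \<and> real (\<Prod>S) > D. \<Prod>p\<in>S. c / real p ^ 2) \<le> D powr (\<delta> - 1) * exp (c * zeta_sum \<delta>)"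
proof -
  have term_le: "(\<Prod>p\<in>S. c / real p ^ 2) \<le> D powr (\<delta> - 1) * (\<Prod>p\<in>S. c * real p powr (-1-\<delta>))"
    if S: "S \<subseteq> P" "real (\<Prod>S) > D" for S
  proof -
    have finS: "finite S" and S0: "0 \<notin> S"
      using S P finite_subset by auto
    define N where "N = real (\<Prod>S)"
    have N0: "N > 0"
      using S0 by (auto simp: N_def intro!: prod_pos intro: gr0I)
    have "(\<Prod>p\<in>S. c / real p ^ 2) = (\<Prod>p\<in>S. c * real p powr (-2))"
      using S0 by (intro prod.cong refl) (auto simp: powr_minus divide_simps powr_realpow)
    also have "\<dots> = c ^ card S * N powr (-2)"
      unfolding prod_const_times_powr[OF finS S0] N_def ..
    also have "\<dots> \<le> c ^ card S * (D powr (\<delta> - 1) * N powr (-1-\<delta>))"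
    proof (intro mult_left_mono)
      have "D powr (1 - \<delta>) \<le> N powr (1 - \<delta>)"
        using S D \<delta> by (intro powr_mono2) (auto simp: N_def)
      then have "N powr (-2) \<le> D powr (\<delta> - 1) * N powr (1 - \<delta>) * N powr (-2)"
        using D N0 by (simp add: powr_diff powr_minus divide_simps mult_ac)
      also have "\<dots> = D powr (\<delta> - 1) * N powr (-1-\<delta>)"
        using N0 by (simp add: mult.assoc flip: powr_add)
      finally show "N powr (-2) \<le> D powr (\<delta> - 1) * N powr (-1-\<delta>)" .
    qed (use c in simp)
    finally show ?thesis
      unfolding prod_const_times_powr[OF finS S0] N_def by (simp add: mult_ac)
  qed
  have "(\<Sum>S | S \<subseteq> P \<and> real (\<Prod>S) > D. \<Prod>p\<in>S. c / real p ^ 2)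
          \<le> (\<Sum>S | S \<subseteq> P \<and> real (\<Prod>S) > D. D powr (\<delta> - 1) * (\<Prod>p\<in>S. c * real p powr (-1-\<delta>)))"
    using term_le by (intro sum_mono) auto
  also have "\<dots> \<le> (\<Sum>S\<in>Pow P. D powr (\<delta> - 1) * (\<Prod>p\<in>S. c * real p powr (-1-\<delta>)))"
    using P c by (intro sum_mono2) (auto intro!: mult_nonneg_nonneg prod_nonneg)
  also have "\<dots> \<le> D powr (\<delta> - 1) * exp (c * zeta_sum \<delta>)"
    unfolding sum_distrib_left[symmetric]
    by (intro mult_left_mono sum_subsets_prod_powr_le_exp P c \<delta>) simp
  finally show ?thesis .
qed

text \<open>Elements below \<open>2 powr (1/\<delta>)\<close> are few, and each larger one contributes a factor \<open>p powr \<delta> \<ge> 2\<close>.\<close>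
lemma two_power_card_le:
  assumes P: "finite P" "0 \<notin> P" and \<delta>: "\<delta> > 0"
  shows "2 ^ card P \<le> 2 ^ nat \<lceil>2 powr (1/\<delta>)\<rceil> * real (\<Prod>P) powr \<delta>"
proof -
  define B where "B = nat \<lceil>2 powr (1/\<delta>)\<rceil>"
  define P1 where "P1 = {p \<in> P. real p < 2 powr (1/\<delta>)}"
  define P2 where "P2 = {p \<in> P. 2 powr (1/\<delta>) \<le> real p}"
  have fin: "finite P1" "finite P2" and PU: "P = P1 \<union> P2" "P1 \<inter> P2 = {}"
    using P(1) by (auto simp: P1_def P2_def)
  have "P1 \<subseteq> {..<B}"
    unfolding P1_def B_def by (auto simp: less_ceiling_iff zless_nat_eq_int_zless)
  then have card_P1: "card P1 \<le> B"
    using card_mono[of "{..<B}" P1] by simp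
  have P1_ge: "1 \<le> (\<Prod>p\<in>P1. real p powr \<delta>)"
  proof (intro prod_ge_1 ge_one_powr_ge_zero conjI)
    show "1 \<le> real p" if "p \<in> P1" for p
      using that P(2) by (cases p) (auto simp: P1_def)
  qed (use \<delta> in auto)
  have P2_ge: "(2::real) ^ card P2 \<le> (\<Prod>p\<in>P2. real p powr \<delta>)"
  proof -
    have "2 \<le> real p powr \<delta>" if "p \<in> P2" for p
      using that \<delta> powr_mono2[of \<delta> "2 powr (1/\<delta>)" "real p"] by (simp add: P2_def powr_powr)
    then show ?thesis
      using prod_mono[of P2 "\<lambda>_. 2::real"] by simp
  qed
  have "(2::real) ^ card P1 * 2 ^ card P2 \<le> 2 ^ B * (1 * (\<Prod>p\<in>P2. real p powr \<delta>))"
    using card_P1 P2_ge by (intro mult_mono power_increasing) auto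
  also have "\<dots> \<le> 2 ^ B * ((\<Prod>p\<in>P1. real p powr \<delta>) * (\<Prod>p\<in>P2. real p powr \<delta>))"
    using P1_ge by (intro mult_left_mono mult_right_mono) (auto intro: prod_nonneg)
  finally show ?thesis
    using PU fin by (simp add: B_def card_Un_disjoint power_add prod_powr_distrib flip: prod.union_disjoint)
qed

section \<open>The Euler product\<close>

text \<open>Squarefree \<open>d \<le> D\<close>, represented by their sets of prime factors.\<close>
definition prime_sets_upto :: "nat \<Rightarrow> nat set set" where
  "prime_sets_upto D = {S. S \<subseteq> {p. prime p \<and> p \<le> D} \<and> \<Prod>S \<le> D}"

definition euler_term :: "'n::finite itself \<Rightarrow> nat set \<Rightarrow> real" where
  "euler_term T S = (\<Prod>p\<in>S. - sing_density T p / real p)"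

definition sigma_trunc :: "'n::finite itself \<Rightarrow> nat \<Rightarrow> real" where
  "sigma_trunc T D = (\<Sum>S\<in>prime_sets_upto D. euler_term T S)"

lemma finite_primes_upto: "finite {p::nat. prime p \<and> p \<le> N}"
  by simp

lemma finite_prime_sets_upto: "finite (prime_sets_upto D)"
  unfolding prime_sets_upto_def by (rule finite_subset[of _ "Pow {p. prime p \<and> p \<le> D}"]) auto

lemma prime_sets_uptoD:
  assumes "S \<in> prime_sets_upto D"
  shows "finite S" "\<And>p. p \<in> S \<Longrightarrow> prime p" "0 \<notin> S" "\<Prod>S \<le> D"
  using assms finite_subset[OF _ finite_primes_upto] by (auto simp: prime_sets_upto_def)

lemma member_le_prod_primes:
  fixes S :: "nat set"
  assumes "finite S" "\<And>p. p \<in> S \<Longrightarrow> prime p" "q \<in> S"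
  shows "q \<le> \<Prod>S"
proof -
  have "\<Prod>S > 0"
    using assms by (metis not_prime_0 prod_pos gr0I)
  then show ?thesis
    using assms dvd_prodI[of S q "\<lambda>x. x"] by (simp add: dvd_imp_le)
qed

lemma prime_sets_upto_eq:
  assumes "D \<le> N"
  shows "prime_sets_upto D = {S. S \<subseteq> {p. prime p \<and> p \<le> N} \<and> real (\<Prod>S) \<le> real D}"
proof -
  have "S \<subseteq> {p. prime p \<and> p \<le> D}" if S: "S \<subseteq> {p. prime p \<and> p \<le> N}" "\<Prod>S \<le> D" for S
  proof
    fix q assume q: "q \<in> S"
    have "q \<le> \<Prod>S"
      using S q finite_subset[OF S(1) finite_primes_upto] by (intro member_le_prod_primes) auto
    then show "q \<in> {p. prime p \<and> p \<le> D}"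
      using S q by auto
  qed
  then show ?thesis
    using assms unfolding prime_sets_upto_def of_nat_le_iff by auto
qed

lemma prod_sigma_factor_eq_sum_euler_term:
  "(\<Prod>p | prime p \<and> p \<le> N. sigma_factor CARD('n::finite) p)
     = (\<Sum>S\<in>Pow {p. prime p \<and> p \<le> N}. euler_term TYPE('n) S)"
proof -
  have "(\<Prod>p | prime p \<and> p \<le> N. sigma_factor CARD('n) p) = (\<Prod>p | prime p \<and> p \<le> N. 1 + (- sing_density TYPE('n) p / real p))"
    by (intro prod.cong refl) (simp add: sigma_factor_eq_sing_density)
  also have "\<dots> = (\<Sum>S\<in>Pow {p. prime p \<and> p \<le> N}. euler_term TYPE('n) S)"
    using prod_add[OF finite_primes_upto, of "\<lambda>p. - sing_density TYPE('n) p / real p" "\<lambda>_. 1"]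
    by (simp add: euler_term_def add.commute)
  finally show ?thesis .
qed

lemma abs_euler_term_le:
  assumes "\<And>p. p \<in> S \<Longrightarrow> prime p"
  shows "\<bar>euler_term TYPE('n::finite) S\<bar> \<le> (\<Prod>p\<in>S. real CARD('n) / real p ^ 2)"
  unfolding euler_term_def abs_prod
proof (rule prod_mono)
  fix p assume "p \<in> S"
  then have p: "prime p"
    using assms by auto
  have "sing_density TYPE('n) p / real p \<le> (real CARD('n) / real p) / real p"
    using sing_density_prime_bounds(2)[OF p] by (rule divide_right_mono) simp
  then show "0 \<le> \<bar>- sing_density TYPE('n) p / real p\<bar> \<and> \<bar>- sing_density TYPE('n) p / real p\<bar> \<le> real CARD('n) / real p ^ 2"
    using sing_density_prime_bounds(1)[OF p, where 'n='n] by (simp add: power2_eq_square)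
qed

lemma abs_prod_sigma_factor_minus_sigma_trunc_le:
  assumes DN: "D \<le> N" and D: "D \<ge> 1" and \<delta>: "\<delta> > 0" "\<delta> < 1"
  shows "\<bar>(\<Prod>p | prime p \<and> p \<le> N. sigma_factor CARD('n::finite) p) - sigma_trunc TYPE('n) D\<bar>
           \<le> real D powr (\<delta> - 1) * exp (real CARD('n) * zeta_sum \<delta>)"
proof -
  let ?P = "{p. prime p \<and> p \<le> N}"
  let ?T = "{S. S \<subseteq> ?P \<and> real (\<Prod>S) > real D}"
  have split: "Pow ?P = prime_sets_upto D \<union> ?T" "prime_sets_upto D \<inter> ?T = {}"
    using prime_sets_upto_eq[OF DN] by auto
  have "(\<Prod>p | prime p \<and> p \<le> N. sigma_factor CARD('n) p) - sigma_trunc TYPE('n) D = (\<Sum>S\<in>?T. euler_term TYPE('n) S)"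
    unfolding prod_sigma_factor_eq_sum_euler_term sigma_trunc_def split(1)
    using split(2) finite_prime_sets_upto by (subst sum.union_disjoint) (auto intro: finite_subset[of _ "Pow ?P"])
  also have "\<bar>\<dots>\<bar> \<le> (\<Sum>S\<in>?T. \<bar>euler_term TYPE('n) S\<bar>)"
    by (rule sum_abs)
  also have "\<dots> \<le> (\<Sum>S\<in>?T. \<Prod>p\<in>S. real CARD('n) / real p ^ 2)"
    by (intro sum_mono abs_euler_term_le) auto
  also have "\<dots> \<le> real D powr (\<delta> - 1) * exp (real CARD('n) * zeta_sum \<delta>)"
    using D \<delta> by (intro sum_subsets_large_prod_le finite_primes_upto) auto
  finally show ?thesis .
qed

lemma sigma_partial_products_tendsto:
  "(\<lambda>N. \<Prod>p | prime p \<and> p \<le> N. sigma_factor CARD('n::finite) p) \<longlonglongrightarrow> sigma_const CARD('n)"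
proof -
  let ?a = "\<lambda>N. \<Prod>p | prime p \<and> p \<le> N. sigma_factor CARD('n::finite) p"
  define K where "K = exp (real CARD('n) * zeta_sum (1/2))"
  have "Cauchy ?a"
  proof (rule CauchyI)
    fix e :: real assume e: "e > 0"
    define D where "D = nat \<lceil>(2 * K / e) ^ 2\<rceil> + 1"
    have D1: "D \<ge> 1"
      by (simp add: D_def)
    have "real D > (2 * K / e) ^ 2"
      unfolding D_def by linarith
    then have "sqrt (real D) > 2 * K / e"
      by (rule real_less_rsqrt)
    then have lt: "2 * K / sqrt (real D) < e"
      using e D1 by (simp add: divide_less_eq mult.commute)
    have "real D powr (1/2 - 1) = 1 / sqrt (real D)"
      using D1 by (simp add: powr_minus_divide powr_half_sqrt[symmetric] powr_diff)
    then have close: "\<bar>?a m - sigma_trunc TYPE('n) D\<bar> \<le> K / sqrt (real D)" if "D \<le> m" for m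
      using abs_prod_sigma_factor_minus_sigma_trunc_le[OF that D1, of "1/2", where 'n='n] by (simp add: K_def)
    show "\<exists>M. \<forall>m\<ge>M. \<forall>n\<ge>M. norm (?a m - ?a n) < e"
    proof (intro exI allI impI)
      fix m n assume "D \<le> m" "D \<le> n"
      then have "norm (?a m - ?a n) \<le> 2 * K / sqrt (real D)"
        using close[of m] close[of n] by simp
      then show "norm (?a m - ?a n) < e"
        using lt by linarith
    qed
  qed
  then show ?thesis
    unfolding sigma_const_def by (simp add: Cauchy_convergent_iff convergent_LIMSEQ_iff)
qed

lemma abs_sigma_const_minus_sigma_trunc_le:
  assumes D: "D \<ge> 1" and \<delta>: "\<delta> > 0" "\<delta> < 1"
  shows "\<bar>sigma_const CARD('n::finite) - sigma_trunc TYPE('n) D\<bar> \<le> real D powr (\<delta> - 1) * exp (real CARD('n) * zeta_sum \<delta>)"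
proof -
  have "(\<lambda>N. \<bar>(\<Prod>p | prime p \<and> p \<le> N. sigma_factor CARD('n::finite) p) - sigma_trunc TYPE('n) D\<bar>)
          \<longlonglongrightarrow> \<bar>sigma_const CARD('n) - sigma_trunc TYPE('n) D\<bar>"
    by (intro tendsto_intros sigma_partial_products_tendsto)
  then show ?thesis
    by (rule Lim_bounded[where M = D]) (use abs_prod_sigma_factor_minus_sigma_trunc_le D \<delta> in auto)
qed

section \<open>The Moebius sieve\<close>

text \<open>For a set \<open>S\<close> of primes this is \<open>\<mu>(d)/d\<close> with \<open>d = \<Prod>S\<close>.\<close>
definition mobius_weight :: "nat set \<Rightarrow> real" where
  "mobius_weight S = (\<Prod>p\<in>S. - 1 / real p)"

lemma abs_mobius_weight: "finite S \<Longrightarrow> \<bar>mobius_weight S\<bar> = 1 / real (\<Prod>S)"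
  by (simp add: mobius_weight_def abs_prod prod_dividef)

lemma prod_primes_dvd:
  fixes k :: nat
  assumes "finite S" "\<And>p. p \<in> S \<Longrightarrow> prime p \<and> p dvd k"
  shows "\<Prod>S dvd k"
  using assms
proof (induction S rule: finite_induct)
  case empty
  then show ?case
    by simp
next
  case (insert p S)
  then have "coprime p (\<Prod>S)"
    by (intro prod_coprime_right) (metis insertCI primes_coprime)
  then show ?case
    using insert by (simp add: divides_mult)
qed

lemma totient_div_eq_sum_mobius_weight:
  assumes "k > 0"
  shows "real (totient k) / real k = (\<Sum>S\<in>Pow (prime_factors k). mobius_weight S)"
proof -
  have "real (totient k) / real k = (\<Prod>p\<in>prime_factors k. 1 + (- 1 / real p))"
    using assms by (simp add: totient_formula2)
  also have "\<dots> = (\<Sum>S\<in>Pow (prime_factors k). mobius_weight S)"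
    using prod_add[of "prime_factors k" "\<lambda>p. - 1 / real p" "\<lambda>_. 1"] by (simp add: mobius_weight_def add.commute)
  finally show ?thesis .
qed

lemma prime_sets_upto_dvd_eq:
  assumes k: "k > 0"
  shows "{S \<in> Pow (prime_factors k). \<Prod>S \<le> D} = {S \<in> prime_sets_upto D. \<Prod>S dvd k}"
proof (intro equalityI subsetI)
  fix S assume S: "S \<in> {S \<in> Pow (prime_factors k). \<Prod>S \<le> D}"
  then have "S \<subseteq> prime_factors k"
    by simp
  then have finS: "finite S" and pr: "\<And>p. p \<in> S \<Longrightarrow> prime p \<and> p dvd k"
    using finite_subset[of S "prime_factors k"] by (auto simp: prime_factors_dvd k)
  then have "q \<le> D" if "q \<in> S" for q
    using S that member_le_prod_primes[OF finS, of q] by auto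
  then show "S \<in> {S \<in> prime_sets_upto D. \<Prod>S dvd k}"
    using S pr prod_primes_dvd[OF finS pr] by (auto simp: prime_sets_upto_def)
next
  fix S assume S: "S \<in> {S \<in> prime_sets_upto D. \<Prod>S dvd k}"
  then have "q dvd k" if "q \<in> S" for q
    using that prime_sets_uptoD(1)[of S D] dvd_prodI[of S q "\<lambda>x. x"] dvd_trans by auto
  then show "S \<in> {S \<in> Pow (prime_factors k). \<Prod>S \<le> D}"
    using S k prime_sets_uptoD(2,4)[of S D] by (auto simp: prime_factors_dvd)
qed

text \<open>Truncating the Moebius expansion of \<open>\<phi>(k)/k\<close> at divisors \<open>\<le> D\<close> costs at most \<open>1/D\<close> per
  omitted divisor.\<close>
lemma abs_totient_div_minus_truncation_le:
  assumes k: "k > 0" and D: "D \<ge> 1"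
  shows "\<bar>real (totient k) / real k - (\<Sum>S | S \<in> prime_sets_upto D \<and> \<Prod>S dvd k. mobius_weight S)\<bar>
           \<le> 2 ^ card (prime_factors k) / real D"
proof -
  let ?P = "Pow (prime_factors k)"
  let ?Large = "{S \<in> ?P. \<not> \<Prod>S \<le> D}"
  have "real (totient k) / real k = (\<Sum>S\<in>{S \<in> ?P. \<Prod>S \<le> D}. mobius_weight S) + (\<Sum>S\<in>?Large. mobius_weight S)"
    unfolding totient_div_eq_sum_mobius_weight[OF k] by (subst sum.union_disjoint[symmetric]) (auto intro: sum.cong)
  then have "real (totient k) / real k - (\<Sum>S | S \<in> prime_sets_upto D \<and> \<Prod>S dvd k. mobius_weight S)
               = (\<Sum>S\<in>?Large. mobius_weight S)"
    using prime_sets_upto_dvd_eq[OF k, of D] by simp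
  also have "\<bar>\<dots>\<bar> \<le> (\<Sum>S\<in>?Large. 1 / real D)"
  proof (rule order_trans[OF sum_abs sum_mono])
    fix S assume S: "S \<in> ?Large"
    then have "D \<le> \<Prod>S"
      by simp
    then have "real D \<le> real (\<Prod>S)"
      by (simp only: of_nat_le_iff)
    then show "\<bar>mobius_weight S\<bar> \<le> 1 / real D"
      using S D finite_subset[of S "prime_factors k"] by (simp add: abs_mobius_weight frac_le)
  qed
  also have "\<dots> = real (card ?Large) / real D"
    by simp
  also have "\<dots> \<le> real (card ?P) / real D"
    using D by (intro divide_right_mono) (auto intro!: card_mono)
  finally show ?thesis
    by (simp add: card_Pow)
qed

lemma abs_Phi_minus_sieve_le:
  fixes H :: int
  assumes D: "D \<ge> 1"
  defines "NS \<equiv> {A :: int^'n::finite^'n. A \<in> int_matrices_bounded H \<and> det A \<noteq> 0}"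
  shows "\<bar>Phi TYPE('n) H - (\<Sum>S\<in>prime_sets_upto D. mobius_weight S * real (card {A \<in> NS. int (\<Prod>S) dvd det A}))\<bar>
           \<le> (\<Sum>A\<in>NS. 2 ^ card (prime_factors (nat \<bar>det A\<bar>)) / real D)"
proof -
  let ?k = "\<lambda>A::int^'n^'n. nat \<bar>det A\<bar>"
  let ?trunc = "\<lambda>A. \<Sum>S | S \<in> prime_sets_upto D \<and> \<Prod>S dvd ?k A. mobius_weight S"
  have finNS: "finite NS"
    unfolding NS_def by (rule finite_subset[OF _ finite_int_matrices_bounded[of H]]) auto
  have "(\<Sum>S\<in>prime_sets_upto D. mobius_weight S * real (card {A \<in> NS. int (\<Prod>S) dvd det A}))
          = (\<Sum>S\<in>prime_sets_upto D. \<Sum>A | A \<in> NS \<and> \<Prod>S dvd ?k A. mobius_weight S)"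
    by (simp add: mult.commute)
  also have "\<dots> = (\<Sum>A\<in>NS. ?trunc A)"
    using sum.swap_restrict[OF finite_prime_sets_upto finNS, of "\<lambda>S A. mobius_weight S" "\<lambda>S A. \<Prod>S dvd ?k A"]
    by simp
  finally have sieve: "(\<Sum>S\<in>prime_sets_upto D. mobius_weight S * real (card {A \<in> NS. int (\<Prod>S) dvd det A}))
                         = (\<Sum>A\<in>NS. ?trunc A)" .
  have "Phi TYPE('n) H = (\<Sum>A\<in>NS. real (totient (?k A)) / real (?k A))"
    unfolding Phi_def NS_def by (intro sum.cong refl) simp
  then have "\<bar>Phi TYPE('n) H - (\<Sum>A\<in>NS. ?trunc A)\<bar> \<le> (\<Sum>A\<in>NS. \<bar>real (totient (?k A)) / real (?k A) - ?trunc A\<bar>)"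
    by (simp add: sum_subtractf[symmetric] sum_abs)
  also have "\<dots> \<le> (\<Sum>A\<in>NS. 2 ^ card (prime_factors (?k A)) / real D)"
    using D by (intro sum_mono abs_totient_div_minus_truncation_le) (auto simp: NS_def)
  finally show ?thesis
    unfolding sieve .
qed

lemma two_power_card_prime_factors_det_le:
  fixes A :: "int^'n::finite^'n"
  assumes A: "A \<in> int_matrices_bounded H" "det A \<noteq> 0" and \<delta>: "\<delta> > 0"
  shows "2 ^ card (prime_factors (nat \<bar>det A\<bar>))
           \<le> 2 ^ nat \<lceil>2 powr (1/\<delta>)\<rceil> * (fact CARD('n) * real_of_int H ^ CARD('n)) powr \<delta>"
proof -
  let ?k = "nat \<bar>det A\<bar>"
  have k0: "?k > 0"
    using A by simp
  have "\<Prod>(prime_factors ?k) dvd ?k"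
    using k0 by (intro prod_primes_dvd finite_set_mset) (auto simp: prime_factors_dvd)
  then have "real (\<Prod>(prime_factors ?k)) \<le> real ?k"
    using k0 by (simp only: of_nat_le_iff dvd_imp_le)
  also have "real ?k \<le> fact CARD('n) * real_of_int H ^ CARD('n)"
  proof -
    have "\<bar>det A\<bar> \<le> fact CARD('n) * H ^ CARD('n)"
      using A by (intro abs_det_le) (auto simp: int_matrices_bounded_def)
    then have "real_of_int \<bar>det A\<bar> \<le> real_of_int (fact CARD('n) * H ^ CARD('n))"
      by (simp only: of_int_le_iff)
    then show ?thesis
      by simp
  qed
  finally have "real (\<Prod>(prime_factors ?k)) powr \<delta> \<le> (fact CARD('n) * real_of_int H ^ CARD('n)) powr \<delta>"
    using \<delta> by (intro powr_mono2) (auto simp flip: of_nat_prod)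
  moreover have "2 ^ card (prime_factors ?k) \<le> 2 ^ nat \<lceil>2 powr (1/\<delta>)\<rceil> * real (\<Prod>(prime_factors ?k)) powr \<delta>"
    using two_power_card_le[OF finite_set_mset _ \<delta>, of "prime_factorization ?k"] by auto
  ultimately show ?thesis
    by (smt (verit) mult_left_mono zero_le_power)
qed

lemma sing_density_prod_le:
  assumes "finite S" "\<And>p. p \<in> S \<Longrightarrow> prime p"
  shows "sing_density TYPE('n::finite) (\<Prod>S) \<le> real CARD('n) ^ card S / real (\<Prod>S)"
proof -
  have "sing_density TYPE('n) (\<Prod>S) = (\<Prod>p\<in>S. sing_density TYPE('n) p)"
    by (rule sing_density_prod_primes[OF assms])
  also have "\<dots> \<le> (\<Prod>p\<in>S. real CARD('n) / real p)"
    using assms sing_density_prime_bounds by (intro prod_mono) auto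
  also have "\<dots> = real CARD('n) ^ card S / real (\<Prod>S)"
    by (simp add: prod_dividef)
  finally show ?thesis .
qed

lemma power_mult_power_pred_le:
  fixes d Y Z :: real
  assumes "d \<ge> 0" "Y \<ge> 0" "d * Y \<le> Z" "m \<ge> 1"
  shows "d ^ m * Y ^ (m - 1) \<le> d * Z ^ (m - 1)"
proof -
  have "d ^ m * Y ^ (m - 1) = d * (d * Y) ^ (m - 1)"
    using assms(4) by (cases m) (simp_all add: power_mult_distrib)
  also have "\<dots> \<le> d * Z ^ (m - 1)"
    using assms by (intro mult_left_mono power_mono) auto
  finally show ?thesis .
qed

lemma abs_card_dvd_det_minus_density_le:
  fixes H :: int
  assumes d: "d > 0" and H: "H \<ge> 1" and dH: "real d \<le> real_of_int H"
  shows "\<bar>real (card {A \<in> int_matrices_bounded H :: (int^'n::finite^'n) set. int d dvd det A})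
             - sing_density TYPE('n) d * real_of_int (2*H+1) ^ (CARD('n)*CARD('n))\<bar>
           \<le> 2 * real (CARD('n)*CARD('n)) * (sing_density TYPE('n) d * real d) * (5 * real_of_int H) ^ (CARD('n)*CARD('n) - 1)"
proof -
  let ?m = "CARD('n)*CARD('n)"
  define X where "X = real_of_int (2*H+1) / real d"
  define \<rho> where "\<rho> = sing_density TYPE('n) d"
  have d0: "real d > 0" and X0: "X \<ge> 0" and \<rho>0: "\<rho> \<ge> 0"
    using d H by (simp_all add: X_def \<rho>_def sing_density_def)
  have "\<bar>real (card {A \<in> int_matrices_bounded H :: (int^'n^'n) set. int d dvd det A}) - \<rho> * real_of_int (2*H+1) ^ ?m\<bar>
          \<le> \<rho> * real d ^ ?m * ((X + 2) ^ ?m - X ^ ?m)"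
    using card_int_matrices_bounded_dvd_det_approx[OF d, of H, where 'n='n] H d0
    by (simp add: \<rho>_def sing_density_def X_def power_divide)
  also have "\<dots> \<le> \<rho> * real d ^ ?m * (2 * ?m * (X + 2) ^ (?m - 1))"
    using power_add_diff_le[OF X0, of 2 ?m] \<rho>0 by (intro mult_left_mono) auto
  also have "\<dots> = 2 * ?m * \<rho> * (real d ^ ?m * (X + 2) ^ (?m - 1))"
    by (simp only: mult_ac)
  also have "\<dots> \<le> 2 * ?m * \<rho> * (real d * (5 * real_of_int H) ^ (?m - 1))"
  proof (intro mult_left_mono power_mult_power_pred_le)
    have "real d * (X + 2) = real_of_int (2*H+1) + 2 * real d"
      using d0 by (simp add: X_def field_simps)
    then show "real d * (X + 2) \<le> 5 * real_of_int H"
      using dH H by simp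
  qed (use d0 X0 \<rho>0 in \<open>simp_all add: Suc_le_eq\<close>)
  finally show ?thesis
    by (simp add: \<rho>_def mult_ac)
qed

lemma sum_prime_sets_upto_le:
  assumes D: "D \<ge> 1" and c: "c \<ge> 0" and \<delta>: "\<delta> > 0"
  shows "(\<Sum>S\<in>prime_sets_upto D. c ^ card S / real (\<Prod>S)) \<le> real D powr \<delta> * exp (c * zeta_sum \<delta>)"
  unfolding prime_sets_upto_eq[OF order_refl]
  using c \<delta> by (intro sum_subsets_small_prod_le finite_primes_upto) auto

lemma mobius_weight_mult_sing_density:
  assumes "S \<in> prime_sets_upto D"
  shows "mobius_weight S * sing_density TYPE('n::finite) (\<Prod>S) = euler_term TYPE('n) S"
  using sing_density_prod_primes[OF prime_sets_uptoD(1,2)[OF assms], where 'n='n]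
  unfolding mobius_weight_def euler_term_def by (simp add: prod.distrib[symmetric])

lemma card_nonsingular_int_matrices_bounded_dvd_det:
  "real (card {A \<in> {A :: int^'n::finite^'n. A \<in> int_matrices_bounded H \<and> det A \<noteq> 0}. int d dvd det A})
     = real (card {A \<in> int_matrices_bounded H :: (int^'n^'n) set. int d dvd det A})
       - real (card {A \<in> int_matrices_bounded H :: (int^'n^'n) set. det A = 0})"
proof -
  let ?B = "int_matrices_bounded H :: (int^'n^'n) set"
  have "{A \<in> ?B. int d dvd det A} = {A \<in> {A. A \<in> ?B \<and> det A \<noteq> 0}. int d dvd det A} \<union> {A \<in> ?B. det A = 0}"
    by auto
  also have "card \<dots> = card {A \<in> {A. A \<in> ?B \<and> det A \<noteq> 0}. int d dvd det A} + card {A \<in> ?B. det A = 0}"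
    by (rule card_Un_disjoint) (auto intro: finite_subset[OF _ finite_int_matrices_bounded[of H]])
  finally show ?thesis
    by simp
qed

lemma abs_mobius_weight_count_error_le:
  fixes H :: int
  assumes H: "H \<ge> 1" and S: "S \<in> prime_sets_upto (nat H)"
  defines "m \<equiv> CARD('n::finite) * CARD('n)" and "h \<equiv> real_of_int H"
  shows "\<bar>mobius_weight S * (real (card {A \<in> int_matrices_bounded H :: (int^'n^'n) set. int (\<Prod>S) dvd det A})
                                - sing_density TYPE('n) (\<Prod>S) * (2*h+1) ^ m)\<bar>
           \<le> 2 * real m * (5*h) ^ (m - 1) * (real CARD('n) ^ card S / real (\<Prod>S))"
proof -
  let ?N = "real (card {A \<in> int_matrices_bounded H :: (int^'n^'n) set. int (\<Prod>S) dvd det A})"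
  let ?\<rho>d = "sing_density TYPE('n) (\<Prod>S) * real (\<Prod>S)"
  note S' = prime_sets_uptoD[OF S]
  have d0: "\<Prod>S > 0"
    using S'(3) by (auto intro!: prod_pos intro: gr0I)
  have "real (\<Prod>S) \<le> real (nat H)"
    using S'(4) by (simp only: of_nat_le_iff)
  then have count: "\<bar>?N - sing_density TYPE('n) (\<Prod>S) * (2*h+1) ^ m\<bar> \<le> 2 * real m * ?\<rho>d * (5*h) ^ (m - 1)"
    using abs_card_dvd_det_minus_density_le[OF d0 H] H by (simp add: h_def m_def)
  have "\<bar>mobius_weight S\<bar> * ?\<rho>d = sing_density TYPE('n) (\<Prod>S)"
    using d0 by (simp add: abs_mobius_weight[OF S'(1)] del: of_nat_prod)
  also have "\<dots> \<le> real CARD('n) ^ card S / real (\<Prod>S)"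
    by (rule sing_density_prod_le[OF S'(1,2)])
  finally have weight: "\<bar>mobius_weight S\<bar> * ?\<rho>d \<le> real CARD('n) ^ card S / real (\<Prod>S)" .
  have "\<bar>mobius_weight S * (?N - sing_density TYPE('n) (\<Prod>S) * (2*h+1) ^ m)\<bar>
          \<le> \<bar>mobius_weight S\<bar> * (2 * real m * ?\<rho>d * (5*h) ^ (m - 1))"
    unfolding abs_mult by (rule mult_left_mono[OF count]) simp
  also have "\<dots> = 2 * real m * (5*h) ^ (m - 1) * (\<bar>mobius_weight S\<bar> * ?\<rho>d)"
    by (simp only: mult_ac)
  also have "\<dots> \<le> 2 * real m * (5*h) ^ (m - 1) * (real CARD('n) ^ card S / real (\<Prod>S))"
    using H by (intro mult_left_mono[OF weight]) (simp add: h_def)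
  finally show ?thesis .
qed

lemma abs_sum_mobius_weight_count_error_le:
  fixes H :: int
  assumes H: "H \<ge> 1" and \<delta>: "\<delta> > 0"
  defines "m \<equiv> CARD('n::finite) * CARD('n)" and "h \<equiv> real_of_int H"
  shows "\<bar>\<Sum>S\<in>prime_sets_upto (nat H). mobius_weight S *
            (real (card {A \<in> int_matrices_bounded H :: (int^'n^'n) set. int (\<Prod>S) dvd det A})
             - sing_density TYPE('n) (\<Prod>S) * (2*h+1) ^ m)\<bar>
         \<le> 2 * real m * (5*h) ^ (m - 1) * h powr \<delta> * exp (real CARD('n) * zeta_sum \<delta>)"
proof -
  have "\<bar>\<Sum>S\<in>prime_sets_upto (nat H). mobius_weight S *
            (real (card {A \<in> int_matrices_bounded H :: (int^'n^'n) set. int (\<Prod>S) dvd det A})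
             - sing_density TYPE('n) (\<Prod>S) * (2*h+1) ^ m)\<bar>
          \<le> (\<Sum>S\<in>prime_sets_upto (nat H). 2 * real m * (5*h) ^ (m - 1) * (real CARD('n) ^ card S / real (\<Prod>S)))"
    unfolding m_def h_def by (intro order_trans[OF sum_abs sum_mono] abs_mobius_weight_count_error_le[OF H])
  also have "\<dots> = 2 * real m * (5*h) ^ (m - 1) * (\<Sum>S\<in>prime_sets_upto (nat H). real CARD('n) ^ card S / real (\<Prod>S))"
    by (simp add: sum_distrib_left)
  also have "\<dots> \<le> 2 * real m * (5*h) ^ (m - 1) * (h powr \<delta> * exp (real CARD('n) * zeta_sum \<delta>))"
    using sum_prime_sets_upto_le[of "nat H" "real CARD('n)" \<delta>] H \<delta> by (intro mult_left_mono) (auto simp: h_def)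
  finally show ?thesis
    by (simp add: mult.assoc)
qed

lemma abs_sieve_minus_main_le:
  fixes H :: int
  assumes H: "H \<ge> 1" and \<delta>: "\<delta> > 0"
  defines "m \<equiv> CARD('n::finite) * CARD('n)" and "h \<equiv> real_of_int H"
  defines "NS \<equiv> {A :: int^'n^'n. A \<in> int_matrices_bounded H \<and> det A \<noteq> 0}"
  shows "\<bar>(\<Sum>S\<in>prime_sets_upto (nat H). mobius_weight S * real (card {A \<in> NS. int (\<Prod>S) dvd det A}))
            - (2*h+1) ^ m * sigma_trunc TYPE('n) (nat H)\<bar>
         \<le> 2 * real m * (5*h) ^ (m - 1) * h powr \<delta> * exp (real CARD('n) * zeta_sum \<delta>)
           + real CARD('n) * (2*h+1) ^ (m - 1) * h powr \<delta> * exp (zeta_sum \<delta>)"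
proof -
  let ?F = "prime_sets_upto (nat H)"
  let ?N = "\<lambda>S. real (card {A \<in> int_matrices_bounded H :: (int^'n^'n) set. int (\<Prod>S) dvd det A})"
  define Z where "Z = real (card {A \<in> int_matrices_bounded H :: (int^'n^'n) set. det A = 0})"
  have "(\<Sum>S\<in>?F. mobius_weight S * real (card {A \<in> NS. int (\<Prod>S) dvd det A}))
          - (2*h+1) ^ m * sigma_trunc TYPE('n) (nat H)
        = (\<Sum>S\<in>?F. mobius_weight S * (?N S - sing_density TYPE('n) (\<Prod>S) * (2*h+1) ^ m)) - Z * (\<Sum>S\<in>?F. mobius_weight S)"
    unfolding NS_def card_nonsingular_int_matrices_bounded_dvd_det sigma_trunc_def Z_def
    by (simp add: algebra_simps sum_subtractf sum_distrib_left sum_distrib_right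
        mobius_weight_mult_sing_density[symmetric] cong: sum.cong)
  moreover have "\<bar>Z * (\<Sum>S\<in>?F. mobius_weight S)\<bar> \<le> real CARD('n) * (2*h+1) ^ (m - 1) * (h powr \<delta> * exp (zeta_sum \<delta>))"
  proof -
    have "\<bar>\<Sum>S\<in>?F. mobius_weight S\<bar> \<le> (\<Sum>S\<in>?F. 1 ^ card S / real (\<Prod>S))"
      by (intro order_trans[OF sum_abs] sum_mono) (simp add: abs_mobius_weight prime_sets_uptoD(1))
    also have "\<dots> \<le> h powr \<delta> * exp (zeta_sum \<delta>)"
      using sum_prime_sets_upto_le[of "nat H" 1 \<delta>] H \<delta> by (simp add: h_def)
    finally have "\<bar>\<Sum>S\<in>?F. mobius_weight S\<bar> \<le> h powr \<delta> * exp (zeta_sum \<delta>)" .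
    moreover have "Z \<le> real CARD('n) * (2*h+1) ^ (m - 1)"
    proof -
      have "card {A \<in> int_matrices_bounded H :: (int^'n^'n) set. det A = 0} \<le> CARD('n) * nat (2*H+1) ^ (m - 1)"
        unfolding m_def by (rule card_singular_int_matrices_bounded_le) (use H in simp)
      then have "Z \<le> real (CARD('n) * nat (2*H+1) ^ (m - 1))"
        unfolding Z_def by (simp only: of_nat_le_iff)
      then show ?thesis
        using H by (simp add: h_def)
    qed
    ultimately show ?thesis
      by (simp add: abs_mult Z_def mult_mono)
  qed
  ultimately show ?thesis
    using abs_sum_mobius_weight_count_error_le[OF H \<delta>, where 'n='n]
    unfolding m_def h_def by (smt (verit, best) mult.assoc)
qed

lemma card_nonsingular_int_matrices_bounded_le:
  fixes H :: int
  assumes "H \<ge> 0"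
  shows "real (card {A :: int^'n::finite^'n. A \<in> int_matrices_bounded H \<and> det A \<noteq> 0})
           \<le> (2 * real_of_int H + 1) ^ (CARD('n) * CARD('n))"
proof -
  have "card {A :: int^'n^'n. A \<in> int_matrices_bounded H \<and> det A \<noteq> 0} \<le> card (int_matrices_bounded H :: (int^'n^'n) set)"
    by (intro card_mono finite_int_matrices_bounded) auto
  also have "\<dots> = nat (2*H+1) ^ (CARD('n) * CARD('n))"
    by (rule card_int_matrices_bounded[OF assms])
  finally have "real (card {A :: int^'n^'n. A \<in> int_matrices_bounded H \<and> det A \<noteq> 0}) \<le> real (nat (2*H+1) ^ (CARD('n) * CARD('n)))"
    by (simp only: of_nat_le_iff)
  then show ?thesis
    using assms by simp
qed

lemma abs_Phi_minus_sieve_le_power: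
  fixes H :: int
  assumes H: "H \<ge> 1" and \<delta>: "\<delta> > 0"
  defines "m \<equiv> CARD('n::finite) * CARD('n)" and "h \<equiv> real_of_int H"
  defines "NS \<equiv> {A :: int^'n^'n. A \<in> int_matrices_bounded H \<and> det A \<noteq> 0}"
  shows "\<bar>Phi TYPE('n) H - (\<Sum>S\<in>prime_sets_upto (nat H). mobius_weight S * real (card {A \<in> NS. int (\<Prod>S) dvd det A}))\<bar>
           \<le> (2*h+1) ^ m * (2 ^ nat \<lceil>2 powr (1/\<delta>)\<rceil> * (fact CARD('n) * h ^ CARD('n)) powr \<delta>) / h"
proof -
  let ?b = "2 ^ nat \<lceil>2 powr (1/\<delta>)\<rceil> * (fact CARD('n) * h ^ CARD('n)) powr \<delta>"
  have "\<bar>Phi TYPE('n) H - (\<Sum>S\<in>prime_sets_upto (nat H). mobius_weight S * real (card {A \<in> NS. int (\<Prod>S) dvd det A}))\<bar>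
          \<le> (\<Sum>A\<in>NS. 2 ^ card (prime_factors (nat \<bar>det A\<bar>)) / real (nat H))"
    unfolding NS_def using H by (intro abs_Phi_minus_sieve_le) simp
  also have "\<dots> \<le> (\<Sum>A\<in>NS. ?b / h)"
  proof (rule sum_mono)
    fix A assume "A \<in> NS"
    then have "2 ^ card (prime_factors (nat \<bar>det A\<bar>)) \<le> ?b"
      using two_power_card_prime_factors_det_le[of A H \<delta>] \<delta> by (simp add: NS_def h_def)
    then show "2 ^ card (prime_factors (nat \<bar>det A\<bar>)) / real (nat H) \<le> ?b / h"
      using H by (simp add: h_def divide_right_mono)
  qed
  also have "\<dots> = real (card NS) * (?b / h)"
    by simp
  also have "\<dots> \<le> (2*h+1) ^ m * (?b / h)"
    using H card_nonsingular_int_matrices_bounded_le[of H, where 'n='n]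
    by (intro mult_right_mono) (simp_all add: NS_def h_def m_def)
  finally show ?thesis
    by simp
qed

lemma abs_Phi_minus_sigma_trunc_le:
  fixes H :: int
  assumes H: "H \<ge> 1" and \<delta>: "\<delta> > 0"
  defines "m \<equiv> CARD('n::finite) * CARD('n)" and "h \<equiv> real_of_int H"
  shows "\<bar>Phi TYPE('n) H - (2*h+1) ^ m * sigma_trunc TYPE('n) (nat H)\<bar>
         \<le> 2 * real m * (5*h) ^ (m - 1) * h powr \<delta> * exp (real CARD('n) * zeta_sum \<delta>)
           + real CARD('n) * (2*h+1) ^ (m - 1) * h powr \<delta> * exp (zeta_sum \<delta>)
           + (2*h+1) ^ m * (2 ^ nat \<lceil>2 powr (1/\<delta>)\<rceil> * (fact CARD('n) * h ^ CARD('n)) powr \<delta>) / h"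
  using abs_Phi_minus_sieve_le_power[OF H \<delta>, where 'n='n] abs_sieve_minus_main_le[OF H \<delta>, where 'n='n]
  unfolding m_def h_def by linarith

lemma two_times_plus_one_power_le:
  fixes h :: real
  assumes "h \<ge> 1"
  shows "(2*h+1) ^ k \<le> 3 ^ k * h ^ k"
  using assms power_mono[of "2*h+1" "3*h" k] by (simp add: power_mult_distrib)

lemma two_times_plus_one_power_diff_le:
  fixes h :: real
  assumes "h \<ge> 1"
  shows "(2*h+1) ^ m - (2*h) ^ m \<le> real m * (3 ^ (m - 1) * h ^ (m - 1))"
proof -
  have "(2*h+1) ^ m - (2*h) ^ m \<le> real m * (2*h+1) ^ (m - 1)"
    using power_add_diff_le[of "2*h" 1 m] assms by simp
  also have "\<dots> \<le> real m * (3 ^ (m - 1) * h ^ (m - 1))"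
    using two_times_plus_one_power_le[OF assms, of "m - 1"] by (intro mult_left_mono) auto
  finally show ?thesis .
qed

lemma abs_power_mult_minus_le:
  fixes h g \<sigma> :: real
  assumes "h \<ge> 0"
  shows "\<bar>(2*h+1) ^ m * g - 2 ^ m * \<sigma> * h ^ m\<bar> \<le> (2*h+1) ^ m * \<bar>\<sigma> - g\<bar> + \<bar>\<sigma>\<bar> * ((2*h+1) ^ m - (2*h) ^ m)"
proof -
  have "(2*h) ^ m \<le> (2*h+1) ^ m"
    using assms by (intro power_mono) auto
  then have "\<bar>\<sigma> * ((2*h+1) ^ m - (2*h) ^ m)\<bar> = \<bar>\<sigma>\<bar> * ((2*h+1) ^ m - (2*h) ^ m)"
    by (simp add: abs_mult)
  moreover have "\<bar>(2*h+1) ^ m * (\<sigma> - g)\<bar> = (2*h+1) ^ m * \<bar>\<sigma> - g\<bar>"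
    using assms by (simp add: abs_mult)
  moreover have "(2*h+1) ^ m * g - 2 ^ m * \<sigma> * h ^ m = \<sigma> * ((2*h+1) ^ m - (2*h) ^ m) - (2*h+1) ^ m * (\<sigma> - g)"
    by (simp add: algebra_simps power_mult_distrib)
  ultimately show ?thesis
    by linarith
qed

lemma sieve_error_term_le:
  fixes h :: real
  assumes h: "h \<ge> 1" and m: "m \<ge> 1" and bc: "b \<ge> 0" "c \<ge> 0"
  shows "(2*h+1) ^ m * (b * (c * h ^ n) powr \<delta>) / h \<le> 3 ^ m * b * c powr \<delta> * (h ^ (m - 1) * h powr (real n * \<delta>))"
proof -
  have "(c * h ^ n) powr \<delta> = c powr \<delta> * h powr (real n * \<delta>)"
    using h bc by (simp add: powr_mult powr_powr powr_realpow[symmetric])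
  moreover have "h ^ m = h * h ^ (m - 1)"
    using m by (metis power_eq_if not_one_le_zero)
  ultimately have "3 ^ m * h ^ m * (b * (c * h ^ n) powr \<delta>) / h = 3 ^ m * b * c powr \<delta> * (h ^ (m - 1) * h powr (real n * \<delta>))"
    using h by simp
  moreover have "(2*h+1) ^ m * (b * (c * h ^ n) powr \<delta>) / h \<le> 3 ^ m * h ^ m * (b * (c * h ^ n) powr \<delta>) / h"
    using two_times_plus_one_power_le[OF h, of m] h bc by (intro divide_right_mono mult_right_mono) auto
  ultimately show ?thesis
    by simp
qed

lemma abs_Phi_minus_sigma_trunc_le_power:
  fixes H :: int
  assumes H: "H \<ge> 1" and \<delta>: "\<delta> > 0"
  defines "n \<equiv> CARD('n::finite)" and "m \<equiv> CARD('n) * CARD('n)" and "h \<equiv> real_of_int H"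
  shows "\<bar>Phi TYPE('n) H - (2*h+1) ^ m * sigma_trunc TYPE('n) (nat H)\<bar>
         \<le> (2 * real m * 5 ^ (m - 1) * exp (real n * zeta_sum \<delta>) + real n * 3 ^ (m - 1) * exp (zeta_sum \<delta>)
             + 3 ^ m * 2 ^ nat \<lceil>2 powr (1/\<delta>)\<rceil> * fact n powr \<delta>) * (h ^ (m - 1) * h powr (real n * \<delta>))"
proof -
  have h1: "h \<ge> 1"
    using H by (simp add: h_def)
  have m1: "m \<ge> 1" and n1: "n \<ge> 1"
    by (simp_all add: m_def n_def Suc_le_eq)
  have h\<delta>: "h powr \<delta> \<le> h powr (real n * \<delta>)"
    using h1 n1 \<delta> by (intro powr_mono) auto
  have "2 * real m * (5*h) ^ (m - 1) * h powr \<delta> * exp (real n * zeta_sum \<delta>)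
          \<le> 2 * real m * 5 ^ (m - 1) * exp (real n * zeta_sum \<delta>) * (h ^ (m - 1) * h powr (real n * \<delta>))"
    using h\<delta> h1 by (simp add: power_mult_distrib mult_ac mult_left_mono)
  moreover have "real n * (2*h+1) ^ (m - 1) * h powr \<delta> * exp (zeta_sum \<delta>)
                   \<le> real n * 3 ^ (m - 1) * exp (zeta_sum \<delta>) * (h ^ (m - 1) * h powr (real n * \<delta>))"
  proof -
    have "(2*h+1) ^ (m - 1) * h powr \<delta> \<le> (3 ^ (m - 1) * h ^ (m - 1)) * h powr (real n * \<delta>)"
      using two_times_plus_one_power_le[OF h1, of "m - 1"] h\<delta> h1 by (intro mult_mono) auto
    then have "real n * exp (zeta_sum \<delta>) * ((2*h+1) ^ (m - 1) * h powr \<delta>)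
                 \<le> real n * exp (zeta_sum \<delta>) * ((3 ^ (m - 1) * h ^ (m - 1)) * h powr (real n * \<delta>))"
      by (intro mult_left_mono) auto
    then show ?thesis
      by (simp add: mult_ac)
  qed
  moreover have "(2*h+1) ^ m * (2 ^ nat \<lceil>2 powr (1/\<delta>)\<rceil> * (fact n * h ^ n) powr \<delta>) / h
                   \<le> 3 ^ m * 2 ^ nat \<lceil>2 powr (1/\<delta>)\<rceil> * fact n powr \<delta> * (h ^ (m - 1) * h powr (real n * \<delta>))"
    by (rule sieve_error_term_le[OF h1 m1]) simp_all
  ultimately show ?thesis
    using abs_Phi_minus_sigma_trunc_le[OF H \<delta>, where 'n='n] unfolding distrib_right n_def m_def h_def by linarith
qed

lemma abs_main_term_minus_sigma_trunc_le:
  fixes H :: int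
  assumes H: "H \<ge> 1" and \<delta>: "\<delta> > 0" "\<delta> < 1"
  defines "n \<equiv> CARD('n::finite)" and "m \<equiv> CARD('n) * CARD('n)" and "h \<equiv> real_of_int H"
  shows "\<bar>(2*h+1) ^ m * sigma_trunc TYPE('n) (nat H) - 2 ^ m * sigma_const n * h ^ m\<bar>
           \<le> (3 ^ m * exp (real n * zeta_sum \<delta>) + \<bar>sigma_const n\<bar> * real m * 3 ^ (m - 1))
              * (h ^ (m - 1) * h powr (real n * \<delta>))"
proof -
  define \<sigma> where "\<sigma> = sigma_const n"
  define g where "g = sigma_trunc TYPE('n) (nat H)"
  define P where "P = h ^ (m - 1) * h powr (real n * \<delta>)"
  have h1: "h \<ge> 1"
    using H by (simp add: h_def)
  have m1: "m \<ge> 1" and n1: "n \<ge> 1"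
    by (simp_all add: m_def n_def Suc_le_eq)
  have "(2*h+1) ^ m * \<bar>\<sigma> - g\<bar> \<le> (3 ^ m * h ^ m) * (h powr (\<delta> - 1) * exp (real n * zeta_sum \<delta>))"
    using abs_sigma_const_minus_sigma_trunc_le[of "nat H" \<delta>, where 'n='n] H \<delta> two_times_plus_one_power_le[OF h1, of m] h1
    by (intro mult_mono) (simp_all add: \<sigma>_def g_def h_def n_def)
  also have "\<dots> = 3 ^ m * exp (real n * zeta_sum \<delta>) * (h ^ (m - 1) * h powr \<delta>)"
    using h1 m1 by (simp add: powr_diff mult_ac power_eq_if)
  also have "\<dots> \<le> 3 ^ m * exp (real n * zeta_sum \<delta>) * P"
    unfolding P_def using h1 n1 \<delta> by (intro mult_left_mono powr_mono) auto
  finally have trunc: "(2*h+1) ^ m * \<bar>\<sigma> - g\<bar> \<le> 3 ^ m * exp (real n * zeta_sum \<delta>) * P" .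
  have "(2*h+1) ^ m - (2*h) ^ m \<le> real m * (3 ^ (m - 1) * h ^ (m - 1))"
    by (rule two_times_plus_one_power_diff_le[OF h1])
  also have "\<dots> \<le> real m * 3 ^ (m - 1) * P"
    unfolding P_def using h1 n1 \<delta> mult_left_mono[of 1 "h powr (real n * \<delta>)" "real m * 3 ^ (m - 1) * h ^ (m - 1)"]
    by (simp add: ge_one_powr_ge_zero mult_ac)
  finally have shift: "\<bar>\<sigma>\<bar> * ((2*h+1) ^ m - (2*h) ^ m) \<le> \<bar>\<sigma>\<bar> * real m * 3 ^ (m - 1) * P"
    by (simp add: mult_left_mono mult.assoc)
  show ?thesis
    using abs_power_mult_minus_le[of h m g \<sigma>] h1 trunc shift unfolding \<sigma>_def g_def P_def distrib_right by linarith
qed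

lemma Phi_error_le:
  assumes \<delta>: "\<delta> > 0" "\<delta> < 1"
  shows "\<exists>C \<ge> 0. \<forall>H::int. H \<ge> 1 \<longrightarrow>
           \<bar>Phi TYPE('n::finite) H - 2 ^ (CARD('n)^2) * sigma_const CARD('n) * real_of_int H ^ (CARD('n)^2)\<bar>
             \<le> C * real_of_int H powr (real (CARD('n)^2) - 1 + real CARD('n) * \<delta>)"
proof -
  let ?n = "CARD('n)"
  let ?m = "CARD('n) * CARD('n)"
  define C where "C = 2 * real ?m * 5 ^ (?m - 1) * exp (real ?n * zeta_sum \<delta>) + real ?n * 3 ^ (?m - 1) * exp (zeta_sum \<delta>)
    + 3 ^ ?m * 2 ^ nat \<lceil>2 powr (1/\<delta>)\<rceil> * fact ?n powr \<delta> + 3 ^ ?m * exp (real ?n * zeta_sum \<delta>)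
    + \<bar>sigma_const ?n\<bar> * real ?m * 3 ^ (?m - 1)"
  have "C \<ge> 0"
    unfolding C_def by (intro add_nonneg_nonneg mult_nonneg_nonneg) auto
  moreover have "\<bar>Phi TYPE('n) H - 2 ^ (?n^2) * sigma_const ?n * real_of_int H ^ (?n^2)\<bar>
                   \<le> C * real_of_int H powr (real (?n^2) - 1 + real ?n * \<delta>)" if H: "H \<ge> 1" for H :: int
  proof -
    have powr_eq: "real_of_int H ^ (?m - 1) * real_of_int H powr (real ?n * \<delta>) = real_of_int H powr (real ?m - 1 + real ?n * \<delta>)"
      using H by (simp add: powr_add powr_realpow[symmetric] of_nat_diff)
    show ?thesis
      using abs_Phi_minus_sigma_trunc_le_power[OF H \<delta>(1), where 'n='n] abs_main_term_minus_sigma_trunc_le[OF H \<delta>, where 'n='n]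
      unfolding powr_eq unfolding C_def power2_eq_square distrib_right by linarith
  qed
  ultimately show ?thesis
    by blast
qed

lemma Phi_asymptotic:
  assumes \<epsilon>: "\<epsilon> > 0"
  shows "\<exists>C \<ge> 0. \<forall>H::int. H \<ge> 1 \<longrightarrow>
           \<bar>Phi TYPE('n::finite) H - 2 ^ (CARD('n)^2) * sigma_const CARD('n) * real_of_int H ^ (CARD('n)^2)\<bar>
             \<le> C * real_of_int H powr (real (CARD('n)^2) - 1 + \<epsilon>)"
proof -
  let ?n = "CARD('n)"
  define \<delta> where "\<delta> = min (1/2) (\<epsilon> / real ?n)"
  have \<delta>: "\<delta> > 0" "\<delta> < 1"
    using \<epsilon> by (auto simp: \<delta>_def)
  have "real ?n * \<delta> \<le> real ?n * (\<epsilon> / real ?n)"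
    by (intro mult_left_mono) (auto simp: \<delta>_def)
  then have exponent: "real (?n^2) - 1 + real ?n * \<delta> \<le> real (?n^2) - 1 + \<epsilon>"
    by simp
  obtain C where "C \<ge> 0" and C: "\<forall>H::int. H \<ge> 1 \<longrightarrow>
      \<bar>Phi TYPE('n) H - 2 ^ (?n^2) * sigma_const ?n * real_of_int H ^ (?n^2)\<bar>
        \<le> C * real_of_int H powr (real (?n^2) - 1 + real ?n * \<delta>)"
    using Phi_error_le[OF \<delta>] by blast
  have "C * real_of_int H powr (real (?n^2) - 1 + real ?n * \<delta>) \<le> C * real_of_int H powr (real (?n^2) - 1 + \<epsilon>)"
    if "H \<ge> 1" for H :: int
    using that exponent \<open>C \<ge> 0\<close> by (intro mult_left_mono powr_mono) auto
  then show ?thesis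
    using C \<open>C \<ge> 0\<close> by (meson order_trans)
qed

theorem theorem1p3:
  fixes n :: nat
  defines "n \<equiv> CARD('n::finite)"
  shows "\<forall>\<epsilon>>0. \<exists>C H0. \<forall>H::int. H \<ge> H0 \<longrightarrow>
     \<bar>Phi TYPE('n) H - 2 ^ (n^2) * sigma_const n * real_of_int H ^ (n^2)\<bar>
       \<le> C * real_of_int H powr (real (n^2) - vartheta n + \<epsilon>)"
proof (intro allI impI)
  fix \<epsilon> :: real assume "\<epsilon> > 0"
  then obtain C where "C \<ge> 0" and C: "\<forall>H::int. H \<ge> 1 \<longrightarrow>
      \<bar>Phi TYPE('n) H - 2 ^ (n^2) * sigma_const n * real_of_int H ^ (n^2)\<bar>
        \<le> C * real_of_int H powr (real (n^2) - 1 + \<epsilon>)"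
    using Phi_asymptotic[where 'n='n] unfolding n_def by blast
  have "vartheta n \<le> 1"
    by (simp add: vartheta_def)
  then have "C * real_of_int H powr (real (n^2) - 1 + \<epsilon>) \<le> C * real_of_int H powr (real (n^2) - vartheta n + \<epsilon>)"
    if "H \<ge> 1" for H :: int
    using that \<open>C \<ge> 0\<close> by (intro mult_left_mono powr_mono) auto
  then show "\<exists>C H0. \<forall>H::int. H \<ge> H0 \<longrightarrow>
     \<bar>Phi TYPE('n) H - 2 ^ (n^2) * sigma_const n * real_of_int H ^ (n^2)\<bar>
       \<le> C * real_of_int H powr (real (n^2) - vartheta n + \<epsilon>)"
    using C by (meson order_trans)
qed

end
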